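(* Let $\lambda\neq 0$, $a\ge 0$, $c\in\mathbb{R}$ with $a^2+c^2\neq 0$, and let $\Omega=[\omega^-,\omega^+]$ with $\omega^-<0<\omega^+$. Consider the control system on $\mathbb{R}^2$ $$\dot s=\omega,\qquad \dot t=\lambda t+\omega(c+as),\qquad \omega\in\Omega .$$ Then: (1) If $a=0$, the system admits a unique control set $\mathcal C$, its closure is $\mathbb{R}\times\left(-\frac{c}{\lambda}\Omega\right)$, and $\mathcal C$ is closed if $\lambda<0$ and open if $\lambda>0$. (2) If $a>0$ and $\lambda<0$, the system admits a unique control set $\mathcal C$, it is closed, and $\mathcal C=\mathbb{R}^2\setminus(\mathcal C^+\cup\mathcal C^-)$, where, with $F_\omega(s,t)=\lambda^2 t+\omega(\lambda(c+as)+a\omega)$, $\mathbf v_a=(-c/a,0)$ and $\varphi(\tau,\mathbf v_a,\omega)=\big(-\tfrac ca+\tau\omega,\ \tfrac{a\omega^2}{\lambda^2}(e^{\lambda\tau}-\lambda\tau-1)\big)$, $$\mathcal C^-=\{\mathbf v: F_{\omega^-}(\mathbf v)<0,\ F_{\omega^+}(\mathbf v)<0\},$$ $$\mathcal C^+=\{(s,t):\exists\tau\ge0,\ \exists\omega\in\{\omega^-,\omega^+\},\ s=\varphi_1(\tau,\mathbf v_a,\omega),\ t>\varphi_2(\tau,\mathbf v_a,\omega)\}.$$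
   Context: Controls are piecewise constant functions $\omega:\mathbb{R}\to\Omega$; $\varphi(\tau,\mathbf v,\omega)$ is the solution at time $\tau$ from $\mathbf v$, and $\mathcal O^+(\mathbf v)$ is the set of points reachable from $\mathbf v$ in nonnegative time. A control set is a nonempty set $\mathcal C\subset\mathbb{R}^2$, maximal with respect to inclusion, such that (i) for every $x\in\mathcal C$ there is a control $\omega$ with $\varphi(\tau,x,\omega)\in\mathcal C$ for all $\tau\ge0$, and (ii) $\mathcal C\subset\overline{\mathcal O^+(x)}$ for all $x\in\mathcal C$. This system is (up to a diffeomorphism) the singular linear control system with $\beta=0$, $\lambda+\beta\neq0$ on $(\mathbb{R}\mathbf e_1\times\{0\})\backslash\mathbb{H}\simeq\mathbb{R}^2$. *)

theory Defs
  imports "HOL-Analysis.Analysis"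
begin

definition fld :: "real \<Rightarrow> real \<Rightarrow> real \<Rightarrow> real \<Rightarrow> real \<times> real \<Rightarrow> real \<times> real" where
  "fld lam a c w v = (w, lam * snd v + w * (c + a * fst v))"

definition pc_control :: "real set \<Rightarrow> (real \<Rightarrow> real) \<Rightarrow> bool" where
  "pc_control Om w \<longleftrightarrow> (\<forall>r. w r \<in> Om) \<and>
     (\<forall>p q. \<exists>D. finite D \<and>
        (\<forall>x y. p \<le> x \<longrightarrow> x \<le> y \<longrightarrow> y \<le> q \<longrightarrow> {x..y} \<inter> D = {} \<longrightarrow> w x = w y))"

definition is_sol :: "real \<Rightarrow> real \<Rightarrow> real \<Rightarrow> (real \<Rightarrow> real) \<Rightarrow> real \<times> real \<Rightarrow> (real \<Rightarrow> real \<times> real) \<Rightarrow> bool" where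
  "is_sol lam a c w v x \<longleftrightarrow> x 0 = v \<and>
     (\<forall>\<tau>\<ge>0. ((\<lambda>r. fld lam a c (w r) (x r)) has_integral (x \<tau> - v)) {0..\<tau>})"

definition orbit_plus :: "real \<Rightarrow> real \<Rightarrow> real \<Rightarrow> real set \<Rightarrow> real \<times> real \<Rightarrow> (real \<times> real) set" where
  "orbit_plus lam a c Om v = {y. \<exists>w x \<tau>. pc_control Om w \<and> is_sol lam a c w v x \<and> \<tau> \<ge> 0 \<and> x \<tau> = y}"

definition cs_prop :: "real \<Rightarrow> real \<Rightarrow> real \<Rightarrow> real set \<Rightarrow> (real \<times> real) set \<Rightarrow> bool" where
  "cs_prop lam a c Om C \<longleftrightarrow> C \<noteq> {} \<and>
     (\<forall>v\<in>C. \<exists>w x. pc_control Om w \<and> is_sol lam a c w v x \<and> (\<forall>\<tau>\<ge>0. x \<tau> \<in> C)) \<and>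
     (\<forall>v\<in>C. C \<subseteq> closure (orbit_plus lam a c Om v))"

definition control_set :: "real \<Rightarrow> real \<Rightarrow> real \<Rightarrow> real set \<Rightarrow> (real \<times> real) set \<Rightarrow> bool" where
  "control_set lam a c Om C \<longleftrightarrow> cs_prop lam a c Om C \<and>
     (\<forall>D. cs_prop lam a c Om D \<and> C \<subseteq> D \<longrightarrow> D = C)"

definition Fw :: "real \<Rightarrow> real \<Rightarrow> real \<Rightarrow> real \<Rightarrow> real \<times> real \<Rightarrow> real" where
  "Fw lam a c w v = lam\<^sup>2 * snd v + w * (lam * (c + a * fst v) + a * w)"

text \<open>Explicit solution from v_a = (-c/a, 0) under the constant control w.\<close>
definition phi_va :: "real \<Rightarrow> real \<Rightarrow> real \<Rightarrow> real \<Rightarrow> real \<Rightarrow> real \<times> real" where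
  "phi_va lam a c \<tau> w = (- c / a + \<tau> * w, a * w\<^sup>2 / lam\<^sup>2 * (exp (lam * \<tau>) - lam * \<tau> - 1))"

definition Cminus :: "real \<Rightarrow> real \<Rightarrow> real \<Rightarrow> real \<Rightarrow> real \<Rightarrow> (real \<times> real) set" where
  "Cminus lam a c wm wp = {v. Fw lam a c wm v < 0 \<and> Fw lam a c wp v < 0}"

definition Cplus :: "real \<Rightarrow> real \<Rightarrow> real \<Rightarrow> real \<Rightarrow> real \<Rightarrow> (real \<times> real) set" where
  "Cplus lam a c wm wp = {(s, t). \<exists>\<tau>\<ge>0. \<exists>w\<in>{wm, wp}.
      s = fst (phi_va lam a c \<tau> w) \<and> t > snd (phi_va lam a c \<tau> w)}"

end

(* Under a constant control w the curve F_w = 0 is itself a trajectory, and every other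
   trajectory approaches it (lam < 0) or leaves it (lam > 0) exponentially, so solutions are
   explicit.  Concatenating such pieces shows that each candidate set (a horizontal strip for
   a = 0, the complement of C+ and C- for a > 0) is invariant under one constant control and
   that each of its points is approximately reachable from every other one.  Maximality comes
   from Lyapunov functions: from a point outside the candidate, every trajectory makes some
   continuous V decrease exponentially (for a = 0, lam > 0: linearly, inside an invariant half
   plane), so the point is not approximately reachable from its own future.  For a > 0, V is the
   height above the boundary curves of C+, or for C- the minimum of the heights below the lines
   F_w = 0 of the two extreme controls. *)

theory Submission
  imports Defs "HOL-Real_Asymp.Real_Asymp"
begin

section \<open>Constant and piecewise constant controls\<close>

definition Fw_level :: "real \<Rightarrow> real \<Rightarrow> real \<Rightarrow> real \<Rightarrow> real" where
  "Fw_level lam a w u = - (w * (lam * u + a * w)) / lam\<^sup>2"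

lemma Fw_eq:
  "lam \<noteq> 0 \<Longrightarrow> Fw lam a c w (s, t) = lam\<^sup>2 * (t - Fw_level lam a w (c + a * s))"
  unfolding Fw_def Fw_level_def by (simp add: field_simps)

lemma Fw_level_zero_control [simp]: "Fw_level lam a 0 u = 0"
  unfolding Fw_level_def by simp

lemma continuous_on_Fw_level [continuous_intros]:
  "continuous_on S f \<Longrightarrow> continuous_on S g \<Longrightarrow> continuous_on S (\<lambda>x. Fw_level lam a (f x) (g x))"
  unfolding Fw_level_def divide_inverse by (intro continuous_intros)

text \<open>The solution under a constant control \<open>w\<close>: for \<open>lam \<noteq> 0\<close> the curve \<open>Fw lam a c w = 0\<close>
  is itself a trajectory, and every other trajectory differs from it in the second component
  by a multiple of \<open>exp (lam * \<tau>)\<close>.\<close>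
definition const_flow :: "real \<Rightarrow> real \<Rightarrow> real \<Rightarrow> real \<Rightarrow> real \<Rightarrow> real \<times> real \<Rightarrow> real \<times> real" where
  "const_flow lam a c w \<tau> p =
     (fst p + w * \<tau>, Fw_level lam a w (c + a * (fst p + w * \<tau>))
                      + (snd p - Fw_level lam a w (c + a * fst p)) * exp (lam * \<tau>))"

lemma const_flow_0 [simp]: "const_flow lam a c w 0 p = p"
  by (simp add: const_flow_def)

lemma const_flow_zero_control: "const_flow lam a c 0 \<tau> (s, t) = (s, t * exp (lam * \<tau>))"
  by (simp add: const_flow_def)

lemma const_flow_a0: "const_flow lam 0 c w \<tau> (s, t) = (s + w * \<tau>, k * w + (t - k * w) * exp (lam * \<tau>))"
  if "k = - (c / lam)"
  using that unfolding const_flow_def Fw_level_def by (simp add: power2_eq_square algebra_simps)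

lemma continuous_on_const_flow: "continuous_on UNIV (const_flow lam a c w \<tau>)"
  unfolding const_flow_def by (intro continuous_intros)

lemma const_flow_has_vector_derivative:
  assumes "lam \<noteq> 0"
  shows "((\<lambda>r. const_flow lam a c w (r - T) p) has_vector_derivative
           fld lam a c w (const_flow lam a c w (r - T) p)) (at r within S)"
proof -
  let ?L = "Fw_level lam a w" and ?u = "\<lambda>r. c + a * (fst p + w * (r - T))"
  have L: "((\<lambda>r. ?L (?u r)) has_real_derivative - (a * w\<^sup>2 / lam)) (at r within S)"
    unfolding Fw_level_def using assms
    by (auto intro!: derivative_eq_intros simp: field_simps power2_eq_square)
  have s: "((\<lambda>r. fst p + w * (r - T)) has_real_derivative w) (at r within S)"
    by (auto intro!: derivative_eq_intros)
  have t: "((\<lambda>r. ?L (?u r) + (snd p - ?L (c + a * fst p)) * exp (lam * (r - T))) has_real_derivative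
      - (a * w\<^sup>2 / lam) + (snd p - ?L (c + a * fst p)) * exp (lam * (r - T)) * lam) (at r within S)"
    by (auto intro!: derivative_eq_intros L)
  have "- (a * w\<^sup>2 / lam) + (snd p - ?L (c + a * fst p)) * exp (lam * (r - T)) * lam
      = lam * (?L (?u r) + (snd p - ?L (c + a * fst p)) * exp (lam * (r - T))) + w * ?u r"
    unfolding Fw_level_def using assms by (simp add: field_simps power2_eq_square)
  with has_vector_derivative_Pair[OF s[unfolded has_real_derivative_iff_has_vector_derivative]
      t[unfolded has_real_derivative_iff_has_vector_derivative]]
  show ?thesis
    unfolding const_flow_def fld_def by simp
qed

lemma const_flow_has_integral:
  assumes "lam \<noteq> 0" "T \<le> \<tau>"
  shows "((\<lambda>r. fld lam a c w (const_flow lam a c w (r - T) p))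
           has_integral (const_flow lam a c w (\<tau> - T) p - p)) {T..\<tau>}"
proof -
  have "((\<lambda>r. fld lam a c w (const_flow lam a c w (r - T) p)) has_integral
      (const_flow lam a c w (\<tau> - T) p - const_flow lam a c w (T - T) p)) {T..\<tau>}"
    by (rule fundamental_theorem_of_calculus) (use assms const_flow_has_vector_derivative in auto)
  then show ?thesis by simp
qed

lemma pc_control_const: "w \<in> Om \<Longrightarrow> pc_control Om (\<lambda>_. w)"
  unfolding pc_control_def by (auto intro!: exI[of _ "{}"])

lemma pc_control_switch:
  assumes "pc_control Om w" "\<omega> \<in> Om"
  shows "pc_control Om (\<lambda>r. if r < T then w r else \<omega>)"
  unfolding pc_control_def
proof (intro conjI allI)
  show "(if r < T then w r else \<omega>) \<in> Om" for r
    using assms unfolding pc_control_def by auto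
  fix p q
  obtain D where D: "finite D"
    "\<forall>x y. p \<le> x \<longrightarrow> x \<le> y \<longrightarrow> y \<le> q \<longrightarrow> {x..y} \<inter> D = {} \<longrightarrow> w x = w y"
    using assms unfolding pc_control_def by blast
  show "\<exists>D. finite D \<and> (\<forall>x y. p \<le> x \<longrightarrow> x \<le> y \<longrightarrow> y \<le> q \<longrightarrow> {x..y} \<inter> D = {} \<longrightarrow>
      (if x < T then w x else \<omega>) = (if y < T then w y else \<omega>))"
  proof (intro exI[of _ "insert T D"] conjI allI impI)
    fix x y assume xy: "p \<le> x" "x \<le> y" "y \<le> q" "{x..y} \<inter> insert T D = {}"
    then have "y < T \<or> T < x" by auto
    then show "(if x < T then w x else \<omega>) = (if y < T then w y else \<omega>)"
      using D xy by auto
  qed (use D in auto)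
qed

lemma is_sol_const_flow: "lam \<noteq> 0 \<Longrightarrow> is_sol lam a c (\<lambda>_. w) p (\<lambda>r. const_flow lam a c w r p)"
  unfolding is_sol_def using const_flow_has_integral[of lam 0] by auto

lemma is_sol_switch:
  assumes lam: "lam \<noteq> 0" and sol: "is_sol lam a c w p x" and T: "T \<ge> 0"
  shows "is_sol lam a c (\<lambda>r. if r < T then w r else \<omega>) p
           (\<lambda>r. if r \<le> T then x r else const_flow lam a c \<omega> (r - T) (x T))"
  unfolding is_sol_def
proof (intro conjI allI impI)
  let ?w = "\<lambda>r. if r < T then w r else \<omega>"
  let ?x = "\<lambda>r. if r \<le> T then x r else const_flow lam a c \<omega> (r - T) (x T)"
  let ?f = "\<lambda>r. fld lam a c (?w r) (?x r)"
  show "?x 0 = p"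
    using sol T unfolding is_sol_def by auto
  have before: "(?f has_integral (x s - p)) {0..s}" if "0 \<le> s" "s \<le> T" for s
  proof (rule has_integral_spike_finite[of "{T}"])
    show "((\<lambda>r. fld lam a c (w r) (x r)) has_integral (x s - p)) {0..s}"
      using sol that unfolding is_sol_def by auto
  qed (use that in auto)
  fix \<tau> :: real assume "0 \<le> \<tau>"
  show "(?f has_integral (?x \<tau> - p)) {0..\<tau>}"
  proof (cases "\<tau> \<le> T")
    case True
    then show ?thesis using before[OF \<open>0 \<le> \<tau>\<close>] by simp
  next
    case False
    have after: "(?f has_integral (const_flow lam a c \<omega> (\<tau> - T) (x T) - x T)) {T..\<tau>}"
      by (rule has_integral_spike_finite[of "{}", OF _ _ const_flow_has_integral[OF lam]])
         (use False in auto)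
    show ?thesis
      using has_integral_combine[OF T _ before[OF T order_refl] after] False by simp
  qed
qed

inductive reach :: "real \<Rightarrow> real \<Rightarrow> real \<Rightarrow> real set \<Rightarrow> real \<times> real \<Rightarrow> real \<times> real \<Rightarrow> bool"
  for lam a c Om p where
  reach_refl: "reach lam a c Om p p"
| reach_step: "reach lam a c Om p q \<Longrightarrow> w \<in> Om \<Longrightarrow> \<tau> \<ge> 0 \<Longrightarrow>
    reach lam a c Om p (const_flow lam a c w \<tau> q)"

lemma reach_trans [trans]:
  assumes "reach lam a c Om p q" "reach lam a c Om q r"
  shows "reach lam a c Om p r"
  using assms(2,1) by induction (auto intro: reach_step)

lemma reach_imp_orbit_plus:
  assumes lam: "lam \<noteq> 0" and "w0 \<in> Om" and "reach lam a c Om p q"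
  shows "q \<in> orbit_plus lam a c Om p"
  using assms(3) unfolding orbit_plus_def
proof induction
  case reach_refl
  show ?case
    using pc_control_const[OF \<open>w0 \<in> Om\<close>] is_sol_const_flow[OF lam] by fastforce
next
  case (reach_step q \<omega> \<tau>)
  then obtain w x T where wx: "pc_control Om w" "is_sol lam a c w p x" "T \<ge> 0" "x T = q"
    by blast
  show ?case
    using pc_control_switch[OF wx(1) \<open>\<omega> \<in> Om\<close>, of T] is_sol_switch[OF lam wx(2,3), of \<omega>]
      wx(3,4) \<open>\<tau> \<ge> 0\<close>
    by (intro CollectI exI[of _ "\<lambda>r. if r < T then w r else \<omega>"]
        exI[of _ "\<lambda>r. if r \<le> T then x r else const_flow lam a c \<omega> (r - T) (x T)"]
        exI[of _ "T + \<tau>"]) auto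
qed

lemma reach_lower_semicontinuous:
  assumes "reach lam a c Om q r" "e > 0"
  shows "\<exists>d>0. \<forall>q'. dist q' q < d \<longrightarrow> (\<exists>r'. reach lam a c Om q' r' \<and> dist r' r < e)"
  using assms
proof (induction arbitrary: e)
  case reach_refl
  then show ?case by (auto intro: reach.reach_refl)
next
  case (reach_step r \<omega> \<tau>)
  have "isCont (const_flow lam a c \<omega> \<tau>) r"
    using continuous_on_const_flow continuous_on_eq_continuous_at by blast
  then obtain e1 where e1: "e1 > 0"
    "\<forall>r'. dist r' r < e1 \<longrightarrow> dist (const_flow lam a c \<omega> \<tau> r') (const_flow lam a c \<omega> \<tau> r) < e"
    using reach_step.prems unfolding continuous_at_eps_delta by blast
  obtain d where "d > 0" "\<forall>q'. dist q' q < d \<longrightarrow> (\<exists>r'. reach lam a c Om q' r' \<and> dist r' r < e1)"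
    using reach_step.IH[OF e1(1)] by blast
  with e1(2) reach_step.hyps show ?case
    by (metis reach.reach_step)
qed

definition reach_closure :: "real \<Rightarrow> real \<Rightarrow> real \<Rightarrow> real set \<Rightarrow> real \<times> real \<Rightarrow> (real \<times> real) set" where
  "reach_closure lam a c Om p = closure {q. reach lam a c Om p q}"

lemma reach_in_reach_closure: "reach lam a c Om p q \<Longrightarrow> q \<in> reach_closure lam a c Om p"
  unfolding reach_closure_def by (simp add: closure_def)

lemma reach_closure_approachable:
  assumes "\<And>e. e > 0 \<Longrightarrow> \<exists>z\<in>reach_closure lam a c Om p. dist z y < e"
  shows "y \<in> reach_closure lam a c Om p"
  using assms closed_approachable unfolding reach_closure_def by blast

lemma reach_closure_trans:
  assumes "q \<in> reach_closure lam a c Om p" "r \<in> reach_closure lam a c Om q"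
  shows "r \<in> reach_closure lam a c Om p"
proof (rule reach_closure_approachable)
  fix e :: real assume e: "e > 0"
  obtain r1 where r1: "reach lam a c Om q r1" "dist r1 r < e/2"
    using assms(2) e unfolding reach_closure_def closure_approachable by (metis half_gt_zero mem_Collect_eq)
  obtain d where d: "d > 0" "\<forall>q'. dist q' q < d \<longrightarrow> (\<exists>r'. reach lam a c Om q' r' \<and> dist r' r1 < e/2)"
    using reach_lower_semicontinuous[OF r1(1), of "e/2"] e by auto
  obtain q' where q': "reach lam a c Om p q'" "dist q' q < d"
    using assms(1) d unfolding reach_closure_def closure_approachable by blast
  obtain r' where r': "reach lam a c Om q' r'" "dist r' r1 < e/2"
    using d q' by blast
  have "reach lam a c Om p r'"
    using reach_trans q' r' by blast
  moreover have "dist r' r < e"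
    using r' r1 dist_triangle_half_l[of r' r1 e r] by (simp add: dist_commute)
  ultimately show "\<exists>z\<in>reach_closure lam a c Om p. dist z r < e"
    using reach_in_reach_closure by blast
qed

lemma reach_closure_subset_closure_orbit_plus:
  assumes "lam \<noteq> 0" "Om \<noteq> {}"
  shows "reach_closure lam a c Om p \<subseteq> closure (orbit_plus lam a c Om p)"
  unfolding reach_closure_def using reach_imp_orbit_plus[OF assms(1)] assms(2)
  by (intro closure_mono) blast

section \<open>Lyapunov functions along solutions\<close>

lemma is_sol_integral:
  assumes "is_sol lam a c w p x" "s \<ge> 0"
  shows "x s = p + integral {0..s} (\<lambda>r. fld lam a c (w r) (x r))"
    and "(\<lambda>r. fld lam a c (w r) (x r)) integrable_on {0..s}"
proof -
  have "((\<lambda>r. fld lam a c (w r) (x r)) has_integral (x s - p)) {0..s}"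
    using assms unfolding is_sol_def by auto
  then show "x s = p + integral {0..s} (\<lambda>r. fld lam a c (w r) (x r))"
    and "(\<lambda>r. fld lam a c (w r) (x r)) integrable_on {0..s}"
    using integral_unique by force+
qed

lemma is_sol_continuous:
  assumes "is_sol lam a c w p x"
  shows "continuous_on {0..} x"
proof -
  let ?f = "\<lambda>r. fld lam a c (w r) (x r)"
  have bounded: "continuous_on {0..T} x" for T
  proof -
    have "continuous_on {0..T} (\<lambda>s. p + integral {0..s} ?f)"
      by (intro continuous_intros indefinite_integral_continuous_1)
         (cases "T \<ge> 0", use is_sol_integral(2)[OF assms] in auto)
    then show ?thesis
      by (rule continuous_on_eq) (use is_sol_integral(1)[OF assms] in auto)
  qed
  show ?thesis
    unfolding continuous_on_def
  proof
    fix s :: real assume "s \<in> {0..}"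
    then have "(x \<longlongrightarrow> x s) (at s within {0..s+1})"
      using bounded[of "s+1"] unfolding continuous_on_def by auto
    moreover have "at s within {0..} = at s within {0..s+1}"
      by (rule at_within_nhd[of _ "{..<s+1}"]) auto
    ultimately show "(x \<longlongrightarrow> x s) (at s within {0..})" by simp
  qed
qed

lemma pc_control_right_const:
  assumes "pc_control Om w"
  obtains \<delta> \<omega> where "\<delta> > 0" "\<omega> \<in> Om" "\<And>\<sigma>. \<sigma> \<in> {\<tau><..<\<tau>+\<delta>} \<Longrightarrow> w \<sigma> = \<omega>"
proof -
  obtain D where D: "finite D"
    "\<forall>x y. \<tau> \<le> x \<longrightarrow> x \<le> y \<longrightarrow> y \<le> \<tau>+1 \<longrightarrow> {x..y} \<inter> D = {} \<longrightarrow> w x = w y"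
    using assms unfolding pc_control_def by blast
  obtain d where d: "d > 0" "\<forall>z\<in>D. z \<noteq> \<tau> \<longrightarrow> d \<le> dist \<tau> z"
    using finite_set_avoid[OF D(1), of \<tau>] by blast
  define \<delta> where "\<delta> = min d 1"
  have \<delta>: "\<delta> > 0" "\<delta> \<le> 1" "\<delta> \<le> d"
    using d unfolding \<delta>_def by auto
  have avoid: "{x..y} \<inter> D = {}" if "\<tau> < x" "y < \<tau> + \<delta>" for x y
    using d(2) that \<delta> by (force simp: dist_real_def)
  have const: "w x = w y" if "\<tau> < x" "x \<le> y" "y < \<tau> + \<delta>" for x y
  proof (rule D(2)[rule_format])
    show "{x..y} \<inter> D = {}" by (rule avoid[OF that(1,3)])
  qed (use that \<delta> in auto)
  have "w \<sigma> = w (\<tau> + \<delta>/2)" if "\<sigma> \<in> {\<tau><..<\<tau>+\<delta>}" for \<sigma>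
  proof (cases "\<sigma> \<le> \<tau> + \<delta>/2")
    case True
    then show ?thesis using const[of \<sigma> "\<tau> + \<delta>/2"] that \<delta>(1) by simp
  next
    case False
    then show ?thesis using const[of "\<tau> + \<delta>/2" \<sigma>] that by simp
  qed
  moreover have "w (\<tau> + \<delta>/2) \<in> Om"
    using assms unfolding pc_control_def by auto
  ultimately show ?thesis using that \<delta>(1) by blast
qed

lemma is_sol_has_vector_derivative:
  assumes sol: "is_sol lam a c w p x" and "0 \<le> \<alpha>" and const: "\<And>r. r \<in> {\<alpha><..<\<beta>} \<Longrightarrow> w r = \<omega>"
    and \<sigma>: "\<sigma> \<in> {\<alpha><..<\<beta>}"
  shows "(x has_vector_derivative fld lam a c \<omega> (x \<sigma>)) (at \<sigma>)"
proof -
  let ?f = "\<lambda>r. fld lam a c (w r) (x r)"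
  have "0 < \<sigma>" "\<sigma> < \<beta>"
    using \<sigma> \<open>0 \<le> \<alpha>\<close> by auto
  have "continuous (at \<sigma>) x"
    by (rule continuous_on_interior[OF is_sol_continuous[OF sol]]) (use \<open>0 < \<sigma>\<close> in auto)
  then have "continuous (at \<sigma>) (\<lambda>r. fld lam a c \<omega> (x r))"
    unfolding fld_def by (intro continuous_intros)
  then have "continuous (at \<sigma> within {0..\<beta>} - {}) (\<lambda>r. fld lam a c \<omega> (x r))"
    by (rule continuous_at_imp_continuous_at_within)
  then have fc: "continuous (at \<sigma> within {0..\<beta>} - {}) ?f"
  proof (rule continuous_transform_within[where \<delta> = "min (\<sigma> - \<alpha>) (\<beta> - \<sigma>)"])
    fix r assume "r \<in> {0..\<beta>} - {}" "dist r \<sigma> < min (\<sigma> - \<alpha>) (\<beta> - \<sigma>)"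
    then have "r \<in> {\<alpha><..<\<beta>}"
      by (auto simp: dist_real_def)
    then show "fld lam a c \<omega> (x r) = ?f r"
      using const by simp
  qed (use \<sigma> \<open>0 < \<sigma>\<close> in auto)
  have "?f integrable_on {0..\<beta>}"
    using is_sol_integral(2)[OF sol] \<open>0 < \<sigma>\<close> \<open>\<sigma> < \<beta>\<close> by auto
  then have "((\<lambda>u. integral {0..u} ?f) has_vector_derivative ?f \<sigma>) (at \<sigma> within {0..\<beta>} - {})"
    by (rule integral_has_vector_derivative_continuous_at[OF _ _ _ fc])
       (use \<open>0 < \<sigma>\<close> \<open>\<sigma> < \<beta>\<close> in auto)
  moreover have "at \<sigma> within {0..\<beta>} - {} = at \<sigma>"
    by (rule at_within_interior) (use \<open>0 < \<sigma>\<close> \<open>\<sigma> < \<beta>\<close> in auto)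
  ultimately have "((\<lambda>u. p + integral {0..u} ?f) has_vector_derivative ?f \<sigma>) (at \<sigma>)"
    by (auto intro!: derivative_eq_intros)
  then have "(x has_vector_derivative ?f \<sigma>) (at \<sigma>)"
    by (rule has_vector_derivative_transform_within_open[of _ _ _ "{0<..}"])
       (use \<open>0 < \<sigma>\<close> is_sol_integral(1)[OF sol] in auto)
  then show ?thesis
    using const[OF \<sigma>] by simp
qed

lemma has_real_derivative_compose_vector:
  assumes "(x has_vector_derivative X) (at r)" "(V has_derivative DV) (at (x r))"
  shows "((\<lambda>r. V (x r)) has_real_derivative DV X) (at r)"
proof -
  have "((\<lambda>r. V (x r)) has_derivative (\<lambda>h. DV (h *\<^sub>R X))) (at r)"
    using has_derivative_compose[OF assms(1)[unfolded has_vector_derivative_def] assms(2)] .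
  moreover have "(\<lambda>h. DV (h *\<^sub>R X)) = (*) (DV X)"
    using linear_scale[OF has_derivative_linear[OF assms(2)]] by (auto simp: mult.commute)
  ultimately show ?thesis
    unfolding has_field_derivative_def by simp
qed

lemma locally_right_antimono_imp_le:
  fixes h :: "real \<Rightarrow> real"
  assumes hc: "continuous_on {a..b} h" and "a \<le> b"
    and local: "\<And>\<tau>. \<tau> \<in> {a..<b} \<Longrightarrow> \<exists>\<delta>>0. \<forall>\<sigma>. \<tau> \<le> \<sigma> \<and> \<sigma> \<le> \<tau> + \<delta> \<longrightarrow> h \<sigma> \<le> h \<tau>"
  shows "h b \<le> h a"
proof -
  define S where "S = {s \<in> {a..b}. \<forall>r\<in>{a..s}. h r \<le> h a}"
  define m where "m = Sup S"
  have "a \<in> S" using \<open>a \<le> b\<close> unfolding S_def by auto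
  have bdd: "bdd_above S" unfolding S_def by (auto intro: bdd_aboveI[of _ b])
  have m: "a \<le> m" "m \<le> b"
    unfolding m_def using \<open>a \<in> S\<close> bdd by (auto intro!: cSup_upper cSup_least simp: S_def)
  define K where "K = {a..b} \<inter> h -` {..h a}"
  have sub: "{a..<m} \<subseteq> K"
  proof
    fix r assume r: "r \<in> {a..<m}"
    then obtain s where "s \<in> S" "r < s" using less_cSupE[of r S] \<open>a \<in> S\<close> unfolding m_def by auto
    then show "r \<in> K" using r unfolding S_def K_def by auto
  qed
  have "closed K"
    unfolding K_def by (rule continuous_closed_preimage[OF hc]) auto
  have "{a..m} \<subseteq> K"
  proof (cases "a < m")
    case True
    then show ?thesis using closure_minimal[OF sub \<open>closed K\<close>] by simp
  next
    case False
    then show ?thesis using m \<open>a \<le> b\<close> unfolding K_def by auto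
  qed
  then have "m \<in> S" using m unfolding S_def K_def by auto
  show ?thesis
  proof (cases "m < b")
    case True
    obtain \<delta> where \<delta>: "\<delta> > 0" "\<forall>\<sigma>. m \<le> \<sigma> \<and> \<sigma> \<le> m + \<delta> \<longrightarrow> h \<sigma> \<le> h m"
      using local[of m] True m by auto
    have "h m \<le> h a"
      using \<open>m \<in> S\<close> m unfolding S_def by auto
    have "h r \<le> h a" if "r \<in> {a..min (m + \<delta>) b}" for r
    proof (cases "r \<le> m")
      case True
      then show ?thesis using that \<open>m \<in> S\<close> unfolding S_def by auto
    next
      case False
      then have "h r \<le> h m" using that \<delta>(2) by auto
      then show ?thesis using \<open>h m \<le> h a\<close> by linarith
    qed
    then have "min (m + \<delta>) b \<in> S" unfolding S_def using m \<delta> by auto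
    then have "min (m + \<delta>) b \<le> m" unfolding m_def using bdd by (simp add: cSup_upper)
    then show ?thesis using True \<delta> by simp
  next
    case False
    then show ?thesis using \<open>m \<in> S\<close> m unfolding S_def by auto
  qed
qed

definition exp_integral :: "real \<Rightarrow> real \<Rightarrow> real" where
  "exp_integral k y = (if k = 0 then y else (exp (k * y) - 1) / k)"

lemma exp_integral_0 [simp]: "exp_integral k 0 = 0"
  unfolding exp_integral_def by simp

lemma exp_integral_has_real_derivative: "(exp_integral k has_real_derivative exp (k * y)) (at y)"
  unfolding exp_integral_def by (cases "k = 0") (auto intro!: derivative_eq_intros)

lemma continuous_on_has_derivative_everywhere:
  "(\<And>q. (V has_derivative DV q) (at q)) \<Longrightarrow> continuous_on S V"
  using has_derivative_continuous continuous_at_imp_continuous_on by blast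

lemma continuous_on_lyapunov_along_sol:
  assumes "is_sol lam a c w p x" "\<And>q. (V has_derivative DV q) (at q)"
  shows "continuous_on {0..} (\<lambda>\<sigma>. exp (k * \<sigma>) * V (x \<sigma>) + g * exp_integral k \<sigma>)"
proof -
  have "continuous_on UNIV V"
    by (rule continuous_on_has_derivative_everywhere[OF assms(2)])
  moreover have "continuous_on {0..} (exp_integral k)"
    using exp_integral_has_real_derivative by (meson DERIV_isCont continuous_at_imp_continuous_on)
  ultimately show ?thesis
    using is_sol_continuous[OF assms(1)]
    by (intro continuous_intros) (auto intro: continuous_on_compose2)
qed

lemma lyapunov_local_decrease:
  fixes V :: "real \<times> real \<Rightarrow> real"
  assumes pc: "pc_control Om w" and sol: "is_sol lam a c w p x"
    and Vd: "\<And>q. (V has_derivative DV q) (at q)" and "open U"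
    and decr: "\<And>q \<omega>. q \<in> U \<Longrightarrow> \<omega> \<in> Om \<Longrightarrow> DV q (fld lam a c \<omega> q) \<le> - k * V q - g"
    and "\<tau> \<ge> 0" and "x \<tau> \<in> U"
  shows "\<exists>\<delta>>0. \<forall>\<sigma>. \<tau> \<le> \<sigma> \<and> \<sigma> \<le> \<tau> + \<delta> \<longrightarrow>
    exp (k * \<sigma>) * V (x \<sigma>) + g * exp_integral k \<sigma> \<le> exp (k * \<tau>) * V (x \<tau>) + g * exp_integral k \<tau>"
proof -
  let ?H = "\<lambda>\<sigma>. exp (k * \<sigma>) * V (x \<sigma>) + g * exp_integral k \<sigma>"
  obtain \<delta>1 \<omega> where \<delta>1: "\<delta>1 > 0" "\<omega> \<in> Om" "\<And>\<sigma>. \<sigma> \<in> {\<tau><..<\<tau>+\<delta>1} \<Longrightarrow> w \<sigma> = \<omega>"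
    using pc_control_right_const[OF pc] by blast
  have xc: "continuous_on {0..} x" by (rule is_sol_continuous[OF sol])
  obtain e where e: "e > 0" "ball (x \<tau>) e \<subseteq> U"
    using \<open>open U\<close> \<open>x \<tau> \<in> U\<close> open_contains_ball by blast
  obtain \<delta>2 where \<delta>2: "\<delta>2 > 0" "\<forall>\<sigma>\<in>{0..}. dist \<sigma> \<tau> < \<delta>2 \<longrightarrow> dist (x \<sigma>) (x \<tau>) < e"
    using xc \<open>\<tau> \<ge> 0\<close> e(1) unfolding continuous_on_iff by (metis atLeast_iff)
  define \<delta> where "\<delta> = min (\<delta>1/2) (\<delta>2/2)"
  have \<delta>: "\<delta> > 0" "\<delta> < \<delta>1" "\<delta> < \<delta>2"
    using \<delta>1 \<delta>2 unfolding \<delta>_def by auto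
  have "?H \<sigma> \<le> ?H \<tau>" if \<sigma>: "\<tau> \<le> \<sigma>" "\<sigma> \<le> \<tau> + \<delta>" for \<sigma>
  proof (rule DERIV_nonpos_imp_decreasing_open[OF \<sigma>(1)])
    show "continuous_on {\<tau>..\<sigma>} ?H"
      using continuous_on_subset[OF continuous_on_lyapunov_along_sol[OF sol Vd]] \<open>\<tau> \<ge> 0\<close> by auto
    fix r assume r: "\<tau> < r" "r < \<sigma>"
    let ?X = "fld lam a c \<omega> (x r)"
    have "(x has_vector_derivative ?X) (at r)"
      by (rule is_sol_has_vector_derivative[OF sol \<open>\<tau> \<ge> 0\<close> \<delta>1(3)]) (use r \<sigma> \<delta> in auto)
    then have "((\<lambda>r. V (x r)) has_real_derivative DV (x r) ?X) (at r)"
      using has_real_derivative_compose_vector Vd by blast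
    then have H': "(?H has_real_derivative exp (k * r) * (k * V (x r) + DV (x r) ?X + g)) (at r)"
      by (auto intro!: derivative_eq_intros exp_integral_has_real_derivative simp: algebra_simps)
    have xU: "x r \<in> U"
      using \<delta>2(2)[rule_format, of r] r \<sigma> \<open>\<tau> \<ge> 0\<close> \<delta> e(2) by (auto simp: dist_real_def dist_commute)
    have "k * V (x r) + DV (x r) ?X + g \<le> 0"
      using decr[OF xU \<delta>1(2)] by linarith
    with H' show "\<exists>y. (?H has_real_derivative y) (at r) \<and> y \<le> 0"
      by (meson exp_ge_zero mult_nonneg_nonpos)
  qed
  then show ?thesis using \<delta>(1) by blast
qed

lemma lyapunov_decrease:
  fixes V :: "real \<times> real \<Rightarrow> real"
  assumes pc: "pc_control Om w" and sol: "is_sol lam a c w p x"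
    and Vd: "\<And>q. (V has_derivative DV q) (at q)" and U: "open U"
    and decr: "\<And>q \<omega>. q \<in> U \<Longrightarrow> \<omega> \<in> Om \<Longrightarrow> DV q (fld lam a c \<omega> q) \<le> - k * V q - g"
    and xU: "\<And>\<sigma>. \<sigma> \<ge> 0 \<Longrightarrow> x \<sigma> \<in> U" and "s \<ge> 0"
  shows "exp (k * s) * V (x s) + g * exp_integral k s \<le> V p"
proof -
  have "exp (k * s) * V (x s) + g * exp_integral k s \<le> exp (k * 0) * V (x 0) + g * exp_integral k 0"
  proof (rule locally_right_antimono_imp_le[OF _ \<open>s \<ge> 0\<close>])
    show "continuous_on {0..s} (\<lambda>\<sigma>. exp (k * \<sigma>) * V (x \<sigma>) + g * exp_integral k \<sigma>)"
      using continuous_on_subset[OF continuous_on_lyapunov_along_sol[OF sol Vd]] by auto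
  qed (use lyapunov_local_decrease[OF pc sol Vd U decr] xU in auto)
  then show ?thesis
    using sol unfolding is_sol_def by simp
qed

lemma min_right_local_decrease:
  fixes f g :: "real \<Rightarrow> real"
  assumes "\<exists>\<delta>>0. \<forall>\<sigma>. \<tau> \<le> \<sigma> \<and> \<sigma> \<le> \<tau> + \<delta> \<longrightarrow> exp (k * \<sigma>) * f \<sigma> \<le> exp (k * \<tau>) * f \<tau>"
    and "f \<tau> \<le> g \<tau>"
  shows "\<exists>\<delta>>0. \<forall>\<sigma>. \<tau> \<le> \<sigma> \<and> \<sigma> \<le> \<tau> + \<delta> \<longrightarrow>
    exp (k * \<sigma>) * min (f \<sigma>) (g \<sigma>) \<le> exp (k * \<tau>) * min (f \<tau>) (g \<tau>)"
proof -
  obtain \<delta> where \<delta>: "\<delta> > 0" "\<forall>\<sigma>. \<tau> \<le> \<sigma> \<and> \<sigma> \<le> \<tau> + \<delta> \<longrightarrow> exp (k * \<sigma>) * f \<sigma> \<le> exp (k * \<tau>) * f \<tau>"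
    using assms(1) by blast
  have "exp (k * \<sigma>) * min (f \<sigma>) (g \<sigma>) \<le> exp (k * \<tau>) * min (f \<tau>) (g \<tau>)"
    if "\<tau> \<le> \<sigma> \<and> \<sigma> \<le> \<tau> + \<delta>" for \<sigma>
  proof -
    have "exp (k * \<sigma>) * min (f \<sigma>) (g \<sigma>) \<le> exp (k * \<sigma>) * f \<sigma>"
      by (intro mult_left_mono) auto
    also have "\<dots> \<le> exp (k * \<tau>) * f \<tau>"
      using \<delta>(2) that by blast
    also have "\<dots> = exp (k * \<tau>) * min (f \<tau>) (g \<tau>)"
      using assms(2) by simp
    finally show ?thesis .
  qed
  then show ?thesis
    using \<delta>(1) by blast
qed

lemma lyapunov_min_decrease:
  fixes V1 V2 :: "real \<times> real \<Rightarrow> real"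
  assumes pc: "pc_control Om w" and sol: "is_sol lam a c w p x"
    and V1d: "\<And>q. (V1 has_derivative DV1 q) (at q)" and "open U1"
    and decr1: "\<And>q \<omega>. q \<in> U1 \<Longrightarrow> \<omega> \<in> Om \<Longrightarrow> DV1 q (fld lam a c \<omega> q) \<le> - k * V1 q"
    and V2d: "\<And>q. (V2 has_derivative DV2 q) (at q)" and "open U2"
    and decr2: "\<And>q \<omega>. q \<in> U2 \<Longrightarrow> \<omega> \<in> Om \<Longrightarrow> DV2 q (fld lam a c \<omega> q) \<le> - k * V2 q"
    and U1: "\<And>q. V1 q \<le> V2 q \<Longrightarrow> q \<in> U1" and U2: "\<And>q. V2 q \<le> V1 q \<Longrightarrow> q \<in> U2"
    and "s \<ge> 0"
  shows "exp (k * s) * min (V1 (x s)) (V2 (x s)) \<le> min (V1 p) (V2 p)"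
proof -
  let ?h = "\<lambda>r. exp (k * r) * min (V1 (x r)) (V2 (x r))"
  have local1: "\<exists>\<delta>>0. \<forall>\<sigma>. \<tau> \<le> \<sigma> \<and> \<sigma> \<le> \<tau> + \<delta> \<longrightarrow> exp (k * \<sigma>) * V1 (x \<sigma>) \<le> exp (k * \<tau>) * V1 (x \<tau>)"
    if "\<tau> \<ge> 0" "V1 (x \<tau>) \<le> V2 (x \<tau>)" for \<tau>
    using lyapunov_local_decrease[OF pc sol V1d \<open>open U1\<close> _ that(1) U1[OF that(2)], of k 0] decr1
    by simp
  have local2: "\<exists>\<delta>>0. \<forall>\<sigma>. \<tau> \<le> \<sigma> \<and> \<sigma> \<le> \<tau> + \<delta> \<longrightarrow> exp (k * \<sigma>) * V2 (x \<sigma>) \<le> exp (k * \<tau>) * V2 (x \<tau>)"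
    if "\<tau> \<ge> 0" "V2 (x \<tau>) \<le> V1 (x \<tau>)" for \<tau>
    using lyapunov_local_decrease[OF pc sol V2d \<open>open U2\<close> _ that(1) U2[OF that(2)], of k 0] decr2
    by simp
  have "?h s \<le> ?h 0"
  proof (rule locally_right_antimono_imp_le[OF _ \<open>s \<ge> 0\<close>])
    have xc: "continuous_on {0..s} x"
      using continuous_on_subset[OF is_sol_continuous[OF sol]] by auto
    have "continuous_on {0..s} (\<lambda>r. V1 (x r))"
      by (rule continuous_on_compose2[OF continuous_on_has_derivative_everywhere[OF V1d, of UNIV] xc]) simp
    moreover have "continuous_on {0..s} (\<lambda>r. V2 (x r))"
      by (rule continuous_on_compose2[OF continuous_on_has_derivative_everywhere[OF V2d, of UNIV] xc]) simp
    ultimately show "continuous_on {0..s} ?h"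
      by (intro continuous_intros)
    fix \<tau> assume "\<tau> \<in> {0..<s}"
    then have "\<tau> \<ge> 0" by simp
    show "\<exists>\<delta>>0. \<forall>\<sigma>. \<tau> \<le> \<sigma> \<and> \<sigma> \<le> \<tau> + \<delta> \<longrightarrow> ?h \<sigma> \<le> ?h \<tau>"
    proof (cases "V1 (x \<tau>) \<le> V2 (x \<tau>)")
      case True
      show ?thesis
        using min_right_local_decrease[where f = "\<lambda>r. V1 (x r)" and g = "\<lambda>r. V2 (x r)"]
          local1[OF \<open>\<tau> \<ge> 0\<close> True] True by blast
    next
      case False
      then have "V2 (x \<tau>) \<le> V1 (x \<tau>)" by simp
      then show ?thesis
        using min_right_local_decrease[where f = "\<lambda>r. V2 (x r)" and g = "\<lambda>r. V1 (x r)"]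
          local2[OF \<open>\<tau> \<ge> 0\<close>] by (simp add: min.commute)
    qed
  qed
  then show ?thesis
    using sol unfolding is_sol_def by simp
qed

section \<open>Excluding points from control sets\<close>

text \<open>Since \<open>D\<close> lies in the closure of the orbit of \<open>x \<tau>\<close>, the point \<open>v\<close> would satisfy
  \<open>V v \<le> \<theta>\<close>.\<close>
lemma cs_prop_escape:
  fixes V :: "real \<times> real \<Rightarrow> real"
  assumes cs: "cs_prop lam a c Om D" and "v \<in> D" and Vc: "continuous_on UNIV V"
    and escape: "\<And>w x. pc_control Om w \<Longrightarrow> is_sol lam a c w v x \<Longrightarrow>
      \<exists>\<tau>\<ge>0. \<exists>\<theta><V v. \<forall>z\<in>orbit_plus lam a c Om (x \<tau>). V z \<le> \<theta>"
  shows False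
proof -
  obtain w x where wx: "pc_control Om w" "is_sol lam a c w v x" "\<forall>\<tau>\<ge>0. x \<tau> \<in> D"
    using cs \<open>v \<in> D\<close> unfolding cs_prop_def by blast
  obtain \<tau> \<theta> where \<tau>: "\<tau> \<ge> 0" "\<theta> < V v" "\<forall>z\<in>orbit_plus lam a c Om (x \<tau>). V z \<le> \<theta>"
    using escape[OF wx(1,2)] by blast
  have "D \<subseteq> closure (orbit_plus lam a c Om (x \<tau>))"
    using cs wx(3) \<tau>(1) unfolding cs_prop_def by blast
  also have "\<dots> \<subseteq> {z. V z \<le> \<theta>}"
    by (rule closure_minimal) (use \<tau>(3) closed_Collect_le[OF Vc continuous_on_const] in auto)
  finally show False
    using \<open>v \<in> D\<close> \<tau>(2) by auto
qed

lemma cs_prop_no_exp_decay_point: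
  fixes W :: "real \<times> real \<Rightarrow> real"
  assumes cs: "cs_prop lam a c Om D" and "v \<in> D" and "k > 0"
    and Wc: "continuous_on UNIV W" and "W v > 0"
    and decay: "\<And>w x p s. pc_control Om w \<Longrightarrow> is_sol lam a c w p x \<Longrightarrow> s \<ge> 0 \<Longrightarrow>
      exp (k * s) * W (x s) \<le> W p"
  shows False
proof (rule cs_prop_escape[OF cs \<open>v \<in> D\<close> Wc])
  fix w x assume wx: "pc_control Om w" "is_sol lam a c w v x"
  let ?\<theta> = "max (exp (- k) * W v) 0"
  have "W z \<le> ?\<theta>" if z: "z \<in> orbit_plus lam a c Om (x 1)" for z
  proof -
    obtain w' x' \<tau> where z: "pc_control Om w'" "is_sol lam a c w' (x 1) x'" "\<tau> \<ge> 0" "x' \<tau> = z"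
      using z unfolding orbit_plus_def by blast
    have "exp (k * \<tau>) * W z \<le> W (x 1)"
      using decay[OF z(1-3)] z(4) by simp
    moreover have "exp (k * \<tau>) \<ge> 1"
      using \<open>k > 0\<close> z(3) by simp
    moreover have "W (x 1) \<le> exp (- k) * W v"
      using decay[OF wx, of 1] by (simp add: exp_minus field_simps)
    ultimately show ?thesis
      by (smt (verit) mult_le_cancel_right1)
  qed
  moreover have "?\<theta> < W v"
    using \<open>W v > 0\<close> \<open>k > 0\<close> by (auto simp: mult_less_cancel_right1)
  ultimately show "\<exists>\<tau>\<ge>0. \<exists>\<theta><W v. \<forall>z\<in>orbit_plus lam a c Om (x \<tau>). W z \<le> \<theta>"
    by (intro exI[of _ 1]) auto
qed

lemma cs_prop_no_lyapunov_point:
  fixes V :: "real \<times> real \<Rightarrow> real"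
  assumes cs: "cs_prop lam a c Om D" and "v \<in> D" and "k > 0"
    and Vd: "\<And>q. (V has_derivative DV q) (at q)"
    and decr: "\<And>q \<omega>. \<omega> \<in> Om \<Longrightarrow> DV q (fld lam a c \<omega> q) \<le> - k * V q"
    and "V v > 0"
  shows False
proof (rule cs_prop_no_exp_decay_point[where W = V, OF cs \<open>v \<in> D\<close> \<open>k > 0\<close> _ \<open>V v > 0\<close>])
  show "continuous_on UNIV V"
    by (rule continuous_on_has_derivative_everywhere[OF Vd])
  show "exp (k * s) * V (x s) \<le> V p"
    if "pc_control Om w" "is_sol lam a c w p x" "s \<ge> 0" for w x p s
    using lyapunov_decrease[OF that(1,2) Vd open_UNIV, of k 0] decr that(3) by simp
qed

lemma cs_prop_no_linear_decrease_point:
  fixes V :: "real \<times> real \<Rightarrow> real"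
  assumes cs: "cs_prop lam a c Om D" and "v \<in> D" and "P v" and "g > 0"
    and Vc: "continuous_on UNIV V"
    and inv: "\<And>w x p \<sigma>. pc_control Om w \<Longrightarrow> is_sol lam a c w p x \<Longrightarrow> P p \<Longrightarrow> \<sigma> \<ge> 0 \<Longrightarrow> P (x \<sigma>)"
    and decr: "\<And>w x p \<sigma>. pc_control Om w \<Longrightarrow> is_sol lam a c w p x \<Longrightarrow> P p \<Longrightarrow> \<sigma> \<ge> 0 \<Longrightarrow>
      V (x \<sigma>) + g * \<sigma> \<le> V p"
  shows False
proof (rule cs_prop_escape[OF cs \<open>v \<in> D\<close> Vc])
  fix w x assume wx: "pc_control Om w" "is_sol lam a c w v x"
  have "V z \<le> V v - g" if z: "z \<in> orbit_plus lam a c Om (x 1)" for z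
  proof -
    obtain w' x' \<tau> where z: "pc_control Om w'" "is_sol lam a c w' (x 1) x'" "\<tau> \<ge> 0" "x' \<tau> = z"
      using z unfolding orbit_plus_def by blast
    have "V z + g * \<tau> \<le> V (x 1)"
      using decr[OF z(1,2) inv[OF wx \<open>P v\<close>] z(3)] z(4) by simp
    moreover have "V (x 1) + g \<le> V v"
      using decr[OF wx \<open>P v\<close>, of 1] by simp
    ultimately show ?thesis
      using \<open>g > 0\<close> z(3) by (smt (verit) mult_nonneg_nonneg)
  qed
  then show "\<exists>\<tau>\<ge>0. \<exists>\<theta><V v. \<forall>z\<in>orbit_plus lam a c Om (x \<tau>). V z \<le> \<theta>"
    using \<open>g > 0\<close> by (intro exI[of _ 1] conjI exI[of _ "V v - g"]) auto
qed

lemma unique_control_setI: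
  assumes "lam \<noteq> 0" "Om \<noteq> {}" "C \<noteq> {}"
    and inv: "\<And>v. v \<in> C \<Longrightarrow> \<exists>w x. pc_control Om w \<and> is_sol lam a c w v x \<and> (\<forall>\<tau>\<ge>0. x \<tau> \<in> C)"
    and reach: "\<And>v. v \<in> C \<Longrightarrow> C \<subseteq> reach_closure lam a c Om v"
    and max: "\<And>D. cs_prop lam a c Om D \<Longrightarrow> D \<subseteq> C"
  shows "(\<exists>!C. control_set lam a c Om C) \<and> (\<forall>C'. control_set lam a c Om C' \<longrightarrow> C' = C)"
proof -
  have "cs_prop lam a c Om C"
    unfolding cs_prop_def
  proof (intro conjI ballI)
    fix v assume "v \<in> C"
    show "\<exists>w x. pc_control Om w \<and> is_sol lam a c w v x \<and> (\<forall>\<tau>\<ge>0. x \<tau> \<in> C)"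
      by (rule inv[OF \<open>v \<in> C\<close>])
    show "C \<subseteq> closure (orbit_plus lam a c Om v)"
      using reach[OF \<open>v \<in> C\<close>] reach_closure_subset_closure_orbit_plus[OF assms(1,2)] by (rule order_trans)
  qed (rule \<open>C \<noteq> {}\<close>)
  then have "control_set lam a c Om C"
    unfolding control_set_def using max by auto
  moreover have "C' = C" if "control_set lam a c Om C'" for C'
  proof -
    have "cs_prop lam a c Om C'" "\<forall>D. cs_prop lam a c Om D \<and> C' \<subseteq> D \<longrightarrow> D = C'"
      using that unfolding control_set_def by auto
    then show ?thesis
      using max \<open>cs_prop lam a c Om C\<close> by auto
  qed
  ultimately show ?thesis by blast
qed

section \<open>Approximate reachability for \<open>lam < 0\<close>\<close>

lemma tendsto_affine_times_exp_neg:
  fixes lam A B :: real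
  assumes "lam < 0"
  shows "((\<lambda>T. (A + B * T) * exp (lam * T)) \<longlongrightarrow> 0) at_top"
proof -
  define m where "m = - lam"
  have "m > 0" "lam = - m"
    using assms unfolding m_def by auto
  from \<open>m > 0\<close> show ?thesis
    unfolding \<open>lam = - m\<close> by real_asymp
qed

lemma reach_closure_tendsto:
  assumes "(f \<longlongrightarrow> y) F" "F \<noteq> bot" "\<forall>\<^sub>F z in F. f z \<in> reach_closure lam a c Om p"
  shows "y \<in> reach_closure lam a c Om p"
  using Lim_in_closed_set[OF _ assms(3,2,1)] unfolding reach_closure_def by simp

lemma zero_control_invariant:
  assumes "lam < 0" "0 \<in> Om" "v \<in> S"
    and scale: "\<And>s t \<mu>. (s, t) \<in> S \<Longrightarrow> 0 < \<mu> \<Longrightarrow> \<mu> \<le> 1 \<Longrightarrow> (s, \<mu> * t) \<in> S"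
  shows "\<exists>w x. pc_control Om w \<and> is_sol lam a c w v x \<and> (\<forall>\<tau>\<ge>0. x \<tau> \<in> S)"
proof -
  have "const_flow lam a c 0 \<tau> v \<in> S" if "\<tau> \<ge> 0" for \<tau>
  proof -
    have "0 < exp (lam * \<tau>)" "exp (lam * \<tau>) \<le> 1"
      using \<open>lam < 0\<close> that by (auto simp: mult_nonpos_nonneg)
    then show ?thesis
      using scale[of "fst v" "snd v" "exp (lam * \<tau>)"] \<open>v \<in> S\<close>
        const_flow_zero_control[of lam a c \<tau> "fst v" "snd v"]
      by (simp add: mult.commute)
  qed
  moreover have "is_sol lam a c (\<lambda>_. 0) v (\<lambda>r. const_flow lam a c 0 r v)"
    using is_sol_const_flow \<open>lam < 0\<close> by simp
  ultimately show ?thesis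
    using pc_control_const[OF \<open>0 \<in> Om\<close>] by blast
qed

lemma reach_closure_zero_control_limit:
  assumes "lam < 0" "0 \<in> Om"
  shows "(fst v, 0) \<in> reach_closure lam a c Om v"
proof (rule reach_closure_tendsto)
  let ?f = "\<lambda>T. const_flow lam a c 0 T v"
  have "?f T = (fst v, (snd v + 0 * T) * exp (lam * T))" for T
    using const_flow_zero_control[of lam a c T "fst v" "snd v"] by simp
  then show "(?f \<longlongrightarrow> (fst v, 0)) at_top"
    using tendsto_affine_times_exp_neg[OF \<open>lam < 0\<close>, of "snd v" 0]
    by (simp add: tendsto_Pair del: add_0_right mult_zero_left)
  show "\<forall>\<^sub>F T in at_top. ?f T \<in> reach_closure lam a c Om v"
    using eventually_ge_at_top[of 0]
    by eventually_elim (intro reach_in_reach_closure reach_step[OF reach_refl \<open>0 \<in> Om\<close>])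
qed simp

text \<open>Small controls move along the \<open>s\<close>-axis at an arbitrarily small cost in \<open>t\<close>, because
  \<open>Fw_level lam a w u\<close> vanishes with \<open>w\<close> and the deviation from it is damped.\<close>
lemma reach_closure_axis_shift:
  assumes "lam < 0" "wm < 0" "0 < wp"
  shows "(s1, 0) \<in> reach_closure lam a c {wm..wp} (s0, 0)"
proof (rule reach_closure_tendsto)
  define d where "d = s1 - s0"
  \<comment> \<open>for \<open>d = 0\<close> both control and duration are \<open>0\<close>, since \<open>d / 0 = 0\<close>\<close>
  let ?w = "\<lambda>\<eta>. \<eta> * sgn d" and ?\<tau> = "\<lambda>\<eta>. d / (\<eta> * sgn d)"
  let ?f = "\<lambda>\<eta>. const_flow lam a c (?w \<eta>) (?\<tau> \<eta>) (s0, 0)"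
  let ?L = "\<lambda>\<eta> s. Fw_level lam a (?w \<eta>) (c + a * s)"
  have \<tau>_nonneg: "?\<tau> \<eta> \<ge> 0" if "\<eta> > 0" for \<eta>
    using that by (simp add: d_def sgn_if divide_nonpos_neg divide_nonpos_pos)
  have f: "?f \<eta> = (s1, ?L \<eta> s1 - ?L \<eta> s0 * exp (lam * ?\<tau> \<eta>))" if "\<eta> > 0" for \<eta>
    using that unfolding const_flow_def by (cases "d = 0") (auto simp: d_def sgn_if)
  have L: "((\<lambda>\<eta>. ?L \<eta> s) \<longlongrightarrow> 0) (at_right 0)" for s
    unfolding Fw_level_def using \<open>lam < 0\<close> by (auto intro!: tendsto_eq_intros)
  have "((\<lambda>\<eta>. ?L \<eta> s0 * exp (lam * ?\<tau> \<eta>)) \<longlongrightarrow> 0) (at_right 0)"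
  proof (rule Lim_null_comparison[OF _ tendsto_rabs_zero[OF L]])
    show "\<forall>\<^sub>F \<eta> in at_right 0. norm (?L \<eta> s0 * exp (lam * ?\<tau> \<eta>)) \<le> \<bar>?L \<eta> s0\<bar>"
      using eventually_at_right_less[of 0]
    proof eventually_elim
      case (elim \<eta>)
      have "exp (lam * ?\<tau> \<eta>) \<le> 1"
        using mult_nonpos_nonneg[OF _ \<tau>_nonneg[OF elim], of lam] \<open>lam < 0\<close> by simp
      then have "\<bar>?L \<eta> s0\<bar> * exp (lam * ?\<tau> \<eta>) \<le> \<bar>?L \<eta> s0\<bar>"
        by (rule mult_left_le) simp
      then show ?case
        by (simp add: abs_mult)
    qed
  qed
  from tendsto_diff[OF L[of s1] this]
  have "((\<lambda>\<eta>. (s1, ?L \<eta> s1 - ?L \<eta> s0 * exp (lam * ?\<tau> \<eta>))) \<longlongrightarrow> (s1, 0)) (at_right 0)"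
    by (intro tendsto_Pair tendsto_const) simp
  then show "(?f \<longlongrightarrow> (s1, 0)) (at_right 0)"
    by (rule Lim_transform_eventually)
       (use eventually_at_right_less[of 0] in \<open>eventually_elim, use f in simp\<close>)
  have "\<forall>\<^sub>F \<eta> in at_right 0. \<eta> \<in> {0<..<min wp (- wm)}"
    using assms by (intro eventually_at_right_real) auto
  then show "\<forall>\<^sub>F \<eta> in at_right 0. ?f \<eta> \<in> reach_closure lam a c {wm..wp} (s0, 0)"
  proof eventually_elim
    case (elim \<eta>)
    then have "?w \<eta> \<in> {wm..wp}"
      by (auto simp: sgn_if)
    then show ?case
      using elim \<tau>_nonneg[of \<eta>] by (intro reach_in_reach_closure reach_step[OF reach_refl]) auto
  qed
qed simp

lemma reach_closure_axis:
  assumes "lam < 0" "wm < 0" "0 < wp"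
  shows "(s, 0) \<in> reach_closure lam a c {wm..wp} v"
  using reach_closure_trans[OF reach_closure_zero_control_limit reach_closure_axis_shift] assms by simp

lemma reach_closure_Fw_level:
  assumes "lam < 0" "wm < 0" "0 < wp" "\<omega> \<in> {wm..wp}"
  shows "(s, Fw_level lam a \<omega> (c + a * s)) \<in> reach_closure lam a c {wm..wp} v"
proof (rule reach_closure_tendsto)
  let ?L = "Fw_level lam a \<omega> (c + a * s)"
  let ?f = "\<lambda>T. const_flow lam a c \<omega> T (s - \<omega> * T, 0)"
  have "?f T = (s, ?L - (?L + a * \<omega>\<^sup>2 / lam * T) * exp (lam * T))" for T
    unfolding const_flow_def Fw_level_def using \<open>lam < 0\<close> by (simp add: field_simps power2_eq_square)
  moreover have "((\<lambda>T. ?L - (?L + a * \<omega>\<^sup>2 / lam * T) * exp (lam * T)) \<longlongrightarrow> ?L - 0) at_top"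
    by (intro tendsto_diff tendsto_const tendsto_affine_times_exp_neg \<open>lam < 0\<close>)
  ultimately show "(?f \<longlongrightarrow> (s, ?L)) at_top"
    by (simp add: tendsto_Pair)
  show "\<forall>\<^sub>F T in at_top. ?f T \<in> reach_closure lam a c {wm..wp} v"
    using eventually_ge_at_top[of 0]
  proof eventually_elim
    case (elim T)
    then have "?f T \<in> reach_closure lam a c {wm..wp} (s - \<omega> * T, 0)"
      by (intro reach_in_reach_closure reach_step[OF reach_refl assms(4)])
    then show ?case
      by (rule reach_closure_trans[OF reach_closure_axis[OF assms(1-3)]])
  qed
qed simp

section \<open>The case \<open>a = 0\<close>\<close>

lemma image_scale_interval:
  fixes k wm wp :: real
  assumes "k \<noteq> 0" "wm < 0" "0 < wp"
  obtains tlo thi where "tlo < 0" "0 < thi" "(\<lambda>w. k * w) ` {wm..wp} = {tlo..thi}"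
proof (cases "k > 0")
  case True
  then show ?thesis
    using that[of "k * wm" "k * wp"] assms image_mult_atLeastAtMost_if[of k wm wp]
    by (simp add: mult_pos_neg)
next
  case False
  then show ?thesis
    using that[of "k * wp" "k * wm"] assms image_mult_atLeastAtMost_if[of k wm wp]
    by (simp add: mult_neg_pos mult_neg_neg)
qed

lemma a0_stable_cs_prop_half_plane:
  assumes "lam < 0" "k = - (c / lam)" and cs: "cs_prop lam 0 c Om D"
    and bound: "\<And>\<omega>. \<omega> \<in> Om \<Longrightarrow> \<sigma> * (k * \<omega>) \<le> \<sigma> * b"
  shows "D \<subseteq> {v. \<sigma> * (snd v - b) \<le> 0}"
proof
  fix v assume "v \<in> D"
  show "v \<in> {v. \<sigma> * (snd v - b) \<le> 0}"
  proof (rule ccontr)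
    assume "v \<notin> {v. \<sigma> * (snd v - b) \<le> 0}"
    then have "\<sigma> * (snd v - b) > 0" by simp
    show False
    proof (rule cs_prop_no_lyapunov_point[OF cs \<open>v \<in> D\<close>, of "- lam" "\<lambda>q. \<sigma> * (snd q - b)" "\<lambda>q h. \<sigma> * snd h"])
      fix q :: "real \<times> real" and \<omega> assume "\<omega> \<in> Om"
      have "lam * (\<sigma> * b - \<sigma> * (k * \<omega>)) \<le> 0"
        using bound[OF \<open>\<omega> \<in> Om\<close>] \<open>lam < 0\<close> by (simp add: mult_nonpos_nonneg)
      moreover have "c = - lam * k"
        using assms(1,2) by simp
      then have "\<sigma> * snd (fld lam 0 c \<omega> q) = lam * (\<sigma> * (snd q - b)) + lam * (\<sigma> * b - \<sigma> * (k * \<omega>))"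
        unfolding fld_def by (simp add: algebra_simps)
      ultimately show "\<sigma> * snd (fld lam 0 c \<omega> q) \<le> - (- lam) * (\<sigma> * (snd q - b))"
        by simp
    qed (use \<open>lam < 0\<close> \<open>\<sigma> * (snd v - b) > 0\<close> in \<open>auto intro!: derivative_eq_intros\<close>)
  qed
qed

lemma unique_control_set_a0_stable:
  assumes "lam < 0" "c \<noteq> 0" "wm < 0" "0 < wp"
  shows "(\<exists>!C. control_set lam 0 c {wm..wp} C) \<and>
    (\<forall>C. control_set lam 0 c {wm..wp} C \<longrightarrow>
       closure C = UNIV \<times> ((\<lambda>w. - (c / lam) * w) ` {wm..wp}) \<and> closed C)"
proof -
  define k where "k = - (c / lam)"
  obtain tlo thi where "tlo < 0" "0 < thi" and img: "(\<lambda>w. k * w) ` {wm..wp} = {tlo..thi}"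
    using image_scale_interval[of k wm wp] assms unfolding k_def by auto
  define C :: "(real \<times> real) set" where "C = UNIV \<times> {tlo..thi}"
  have bound: "k * \<omega> \<in> {tlo..thi}" if "\<omega> \<in> {wm..wp}" for \<omega>
    using that unfolding img[symmetric] by blast
  have "(\<exists>!C. control_set lam 0 c {wm..wp} C) \<and> (\<forall>C'. control_set lam 0 c {wm..wp} C' \<longrightarrow> C' = C)"
  proof (rule unique_control_setI)
    show "lam \<noteq> 0" "{wm..wp} \<noteq> {}" "C \<noteq> {}"
      using assms \<open>tlo < 0\<close> \<open>0 < thi\<close> unfolding C_def by auto
    show "\<exists>w x. pc_control {wm..wp} w \<and> is_sol lam 0 c w v x \<and> (\<forall>\<tau>\<ge>0. x \<tau> \<in> C)" if "v \<in> C" for v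
    proof (rule zero_control_invariant[OF \<open>lam < 0\<close> _ that])
      fix s t \<mu> :: real assume "(s, t) \<in> C" "0 < \<mu>" "\<mu> \<le> 1"
      moreover have "min 0 t \<le> \<mu> * t \<and> \<mu> * t \<le> max 0 t"
        using mult_right_mono[of \<mu> 1 t] mult_right_mono_neg[of \<mu> 1 t] \<open>0 < \<mu>\<close> \<open>\<mu> \<le> 1\<close>
        by (cases "t \<ge> 0") (auto simp: zero_le_mult_iff mult_le_0_iff)
      ultimately show "(s, \<mu> * t) \<in> C"
        using \<open>tlo < 0\<close> \<open>0 < thi\<close> unfolding C_def by auto
    qed (use assms in auto)
    show "C \<subseteq> reach_closure lam 0 c {wm..wp} v" for v
    proof
      fix y assume "y \<in> C"
      then obtain \<omega> where "\<omega> \<in> {wm..wp}" "snd y = Fw_level lam 0 \<omega> (c + 0 * fst y)"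
        using img \<open>lam < 0\<close> unfolding C_def k_def Fw_level_def by (force simp: power2_eq_square)
      then show "y \<in> reach_closure lam 0 c {wm..wp} v"
        using reach_closure_Fw_level[where a = 0 and s = "fst y", OF assms(1,3,4) \<open>\<omega> \<in> {wm..wp}\<close>]
        by (metis prod.collapse)
    qed
    show "D \<subseteq> C" if "cs_prop lam 0 c {wm..wp} D" for D
    proof
      fix v assume "v \<in> D"
      have "D \<subseteq> {v. 1 * (snd v - thi) \<le> 0}" "D \<subseteq> {v. - 1 * (snd v - tlo) \<le> 0}"
        using bound by (intro a0_stable_cs_prop_half_plane[OF \<open>lam < 0\<close> k_def that]; simp)+
      then show "v \<in> C"
        using \<open>v \<in> D\<close> unfolding C_def by (auto simp: mem_Times_iff)
    qed
  qed
  moreover have "closed C"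
    unfolding C_def by (intro closed_Times) auto
  ultimately show ?thesis
    using img unfolding C_def k_def by auto
qed

lemma a0_const_flow_hold:
  "lam \<noteq> 0 \<Longrightarrow> k = - (c / lam) \<Longrightarrow> const_flow lam 0 c \<omega> \<tau> (s, k * \<omega>) = (s + \<omega> * \<tau>, k * \<omega>)"
  using const_flow_a0 by simp

lemma a0_hold_invariant:
  assumes "lam \<noteq> 0" "k = - (c / lam)" "\<omega> \<in> Om" "v \<in> UNIV \<times> T" "snd v = k * \<omega>"
  shows "\<exists>w x. pc_control Om w \<and> is_sol lam 0 c w v x \<and> (\<forall>\<tau>\<ge>0. x \<tau> \<in> UNIV \<times> T)"
proof -
  have "const_flow lam 0 c \<omega> \<tau> v \<in> UNIV \<times> T" for \<tau>
    using a0_const_flow_hold[OF assms(1,2), of \<omega> \<tau> "fst v"] assms(4,5) by (cases v) (simp add: mem_Times_iff)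
  then show ?thesis
    using pc_control_const[OF assms(3)] is_sol_const_flow[OF assms(1)] by blast
qed

lemma a0_const_flow_transfer:
  assumes "lam > 0" "k = - (c / lam)" "1 \<le> (t1 - k * \<omega>) / (t0 - k * \<omega>)"
  defines "\<tau> \<equiv> ln ((t1 - k * \<omega>) / (t0 - k * \<omega>)) / lam"
  shows "\<tau> \<ge> 0" "const_flow lam 0 c \<omega> \<tau> (s, t0) = (s + \<omega> * \<tau>, t1)"
proof -
  show "\<tau> \<ge> 0"
    using assms unfolding \<tau>_def by simp
  have "exp (lam * \<tau>) = (t1 - k * \<omega>) / (t0 - k * \<omega>)"
    using assms unfolding \<tau>_def by simp
  moreover have "t0 - k * \<omega> \<noteq> 0"
    using assms(3) by auto
  ultimately show "const_flow lam 0 c \<omega> \<tau> (s, t0) = (s + \<omega> * \<tau>, t1)"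
    using const_flow_a0[OF assms(2)] by (simp add: field_simps)
qed

text \<open>For \<open>lam > 0\<close> the levels \<open>t = k \<omega>\<close> repel, so steering with the extreme level behind the
  current one moves \<open>t\<close> monotonically to any other value in the open strip.\<close>
lemma a0_unstable_level_reach:
  assumes "lam > 0" "k = - (c / lam)" "\<omega>lo \<in> Om" "\<omega>hi \<in> Om"
    and "t0 \<in> {k * \<omega>lo<..<k * \<omega>hi}" "t1 \<in> {k * \<omega>lo<..<k * \<omega>hi}"
  shows "\<exists>d. \<forall>s. reach lam 0 c Om (s, t0) (s + d, t1)"
proof -
  have transfer: "\<exists>d. \<forall>s. reach lam 0 c Om (s, t0) (s + d, t1)"
    if "\<omega> \<in> Om" "1 \<le> (t1 - k * \<omega>) / (t0 - k * \<omega>)" for \<omega>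
    using a0_const_flow_transfer[OF assms(1,2) that(2)] reach_step[OF reach_refl that(1)] by metis
  show ?thesis
  proof (cases "t0 \<le> t1")
    case True
    then show ?thesis
      using transfer[OF assms(3)] assms(5,6) by simp
  next
    case False
    then show ?thesis
      using transfer[OF assms(4)] assms(5,6) by (simp add: le_divide_eq)
  qed
qed

lemma a0_unstable_reach:
  assumes "lam > 0" "k = - (c / lam)" "wm < 0" "0 < wp" "tlo < 0" "0 < thi"
    and img: "(\<lambda>w. k * w) ` {wm..wp} = {tlo..thi}"
    and "t0 \<in> {tlo<..<thi}" "t1 \<in> {tlo<..<thi}"
  shows "reach lam 0 c {wm..wp} (s0, t0) (s1, t1)"
proof -
  let ?reach = "reach lam 0 c {wm..wp}"
  have "tlo \<in> (\<lambda>w. k * w) ` {wm..wp}" "thi \<in> (\<lambda>w. k * w) ` {wm..wp}"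
    unfolding img using \<open>tlo < 0\<close> \<open>0 < thi\<close> by auto
  then obtain \<omega>lo \<omega>hi where \<omega>: "\<omega>lo \<in> {wm..wp}" "\<omega>hi \<in> {wm..wp}" "tlo = k * \<omega>lo" "thi = k * \<omega>hi"
    by blast
  define tp where "tp = k * (wp / 2)"
  define tm where "tm = k * (wm / 2)"
  have "k * wp \<in> {tlo..thi}" "k * wm \<in> {tlo..thi}"
    unfolding img[symmetric] using assms(3,4) by auto
  then have levels: "tp \<in> {tlo<..<thi}" "tm \<in> {tlo<..<thi}"
    using \<open>tlo < 0\<close> \<open>0 < thi\<close> unfolding tp_def tm_def by auto
  have hold: "?reach (s, k * \<omega>) (s + \<omega> * T, k * \<omega>)" if "\<omega> \<in> {wm..wp}" "T \<ge> 0" for s \<omega> T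
    using reach_step[OF reach_refl that, of lam 0 c "(s, k * \<omega>)"] a0_const_flow_hold[OF _ assms(2)] \<open>lam > 0\<close>
    by simp
  have level: "\<exists>d. \<forall>s. ?reach (s, t) (s + d, t')" if "t \<in> {tlo<..<thi}" "t' \<in> {tlo<..<thi}" for t t'
    using a0_unstable_level_reach[OF assms(1,2) \<omega>(1,2)] that unfolding \<omega>(3,4) by blast
  obtain d1 where d1: "\<And>s. ?reach (s, t0) (s + d1, tp)"
    using level[OF assms(8) levels(1)] by blast
  obtain d2 where d2: "\<And>s. ?reach (s, tp) (s + d2, tm)"
    using level[OF levels] by blast
  obtain d3 where d3: "\<And>s. ?reach (s, tm) (s + d3, t1)"
    using level[OF levels(2) assms(9)] by blast
  define R where "R = s1 - s0 - d1 - d2 - d3"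
  define Tp where "Tp = max R 0 / (wp / 2)"
  define Tm where "Tm = min R 0 / (wm / 2)"
  have T: "Tp \<ge> 0" "Tm \<ge> 0" "wp / 2 * Tp + wm / 2 * Tm = R"
    using assms(3,4) unfolding Tp_def Tm_def by (auto simp: divide_nonpos_neg)
  have "?reach (s0, t0) (s0 + d1, tp)"
    by (rule d1)
  also have "?reach \<dots> (s0 + d1 + wp / 2 * Tp, tp)"
    using hold[of "wp / 2" Tp] T assms(3,4) unfolding tp_def by simp
  also have "?reach \<dots> (s0 + d1 + wp / 2 * Tp + d2, tm)"
    by (rule d2)
  also have "?reach \<dots> (s0 + d1 + wp / 2 * Tp + d2 + wm / 2 * Tm, tm)"
    using hold[of "wm / 2" Tm] T assms(3,4) unfolding tm_def by simp
  also have "?reach \<dots> (s0 + d1 + wp / 2 * Tp + d2 + wm / 2 * Tm + d3, t1)"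
    by (rule d3)
  also have "(s0 + d1 + wp / 2 * Tp + d2 + wm / 2 * Tm + d3, t1) = (s1, t1)"
    using T(3) unfolding R_def by simp
  finally show ?thesis .
qed

lemma a0_unstable_half_plane_invariant:
  assumes "lam > 0" "k = - (c / lam)" and bound: "\<forall>\<omega>\<in>Om. \<sigma> * (k * \<omega>) \<le> \<sigma> * b"
    and wx: "pc_control Om w" "is_sol lam 0 c w p x" and "\<sigma> * (snd p - b) \<ge> 0" "\<tau> \<ge> 0"
  shows "\<sigma> * (snd (x \<tau>) - b) \<ge> 0"
proof -
  have "exp (- lam * \<tau>) * (\<sigma> * (b - snd (x \<tau>))) + 0 * exp_integral (- lam) \<tau> \<le> \<sigma> * (b - snd p)"
  proof (rule lyapunov_decrease[OF wx _ open_UNIV _ _ \<open>\<tau> \<ge> 0\<close>])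
    show "((\<lambda>q. \<sigma> * (b - snd q)) has_derivative (\<lambda>h. - (\<sigma> * snd h))) (at q)" for q
      by (auto intro!: derivative_eq_intros)
    fix q :: "real \<times> real" and \<omega> assume "\<omega> \<in> Om"
    have "lam * (\<sigma> * (k * \<omega>) - \<sigma> * b) \<le> 0"
      using bound \<open>\<omega> \<in> Om\<close> \<open>lam > 0\<close> by (simp add: mult_nonneg_nonpos)
    moreover have "c = - lam * k"
      using assms(1,2) by simp
    ultimately show "- (\<sigma> * snd (fld lam 0 c \<omega> q)) \<le> - (- lam) * (\<sigma> * (b - snd q)) - 0"
      unfolding fld_def by (simp add: algebra_simps)
  qed auto
  moreover have "\<sigma> * (b - snd p) \<le> 0"
    using assms(6) by (simp add: algebra_simps)
  ultimately have "exp (- lam * \<tau>) * (\<sigma> * (b - snd (x \<tau>))) \<le> 0"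
    by simp
  then have "\<sigma> * (b - snd (x \<tau>)) \<le> 0"
    using mult_le_0_iff[of "exp (- lam * \<tau>)"] by (smt (verit) exp_gt_zero)
  then show ?thesis
    by (simp add: algebra_simps)
qed

lemma a0_linear_decrease:
  assumes "lam > 0" and wx: "pc_control Om w" "is_sol lam 0 c w p x"
    and above: "\<And>r. r \<ge> 0 \<Longrightarrow> \<sigma> * snd (x r) > \<sigma> * b / 2" and "\<tau> \<ge> 0"
  shows "\<sigma> * (c * fst (x \<tau>) - snd (x \<tau>)) + lam * (\<sigma> * b) / 2 * \<tau> \<le> \<sigma> * (c * fst p - snd p)"
proof -
  have "exp (0 * \<tau>) * (\<sigma> * (c * fst (x \<tau>) - snd (x \<tau>))) + lam * (\<sigma> * b) / 2 * exp_integral 0 \<tau>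
      \<le> \<sigma> * (c * fst p - snd p)"
  proof (rule lyapunov_decrease[OF wx _ _ _ _ \<open>\<tau> \<ge> 0\<close>, where U = "{q. \<sigma> * snd q > \<sigma> * b / 2}"])
    show "((\<lambda>q. \<sigma> * (c * fst q - snd q)) has_derivative (\<lambda>h. \<sigma> * (c * fst h - snd h))) (at q)" for q
      by (auto intro!: derivative_eq_intros)
    show "open {q :: real \<times> real. \<sigma> * snd q > \<sigma> * b / 2}"
      by (intro open_Collect_less continuous_intros)
    fix q :: "real \<times> real" and \<omega> assume "q \<in> {q. \<sigma> * snd q > \<sigma> * b / 2}"
    then have "lam * (\<sigma> * b / 2) \<le> lam * (\<sigma> * snd q)"
      using \<open>lam > 0\<close> by (intro mult_left_mono) auto
    then show "\<sigma> * (c * fst (fld lam 0 c \<omega> q) - snd (fld lam 0 c \<omega> q))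
        \<le> - 0 * (\<sigma> * (c * fst q - snd q)) - lam * (\<sigma> * b) / 2"
      unfolding fld_def by (simp add: algebra_simps)
  qed (use above in auto)
  then show ?thesis
    by (simp add: exp_integral_def)
qed

text \<open>Beyond an extreme level the \<open>t\<close>-component drifts away from the strip, while
  \<open>\<sigma> (c s - t)\<close> decreases at a fixed positive rate.\<close>
lemma a0_unstable_cs_prop_half_plane:
  assumes "lam > 0" "k = - (c / lam)" and cs: "cs_prop lam 0 c Om D"
    and bound: "\<And>\<omega>. \<omega> \<in> Om \<Longrightarrow> \<sigma> * (k * \<omega>) \<le> \<sigma> * b" and "\<sigma> * b > 0"
  shows "D \<subseteq> {v. \<sigma> * (snd v - b) < 0}"
proof
  fix v assume "v \<in> D"
  let ?P = "\<lambda>q. \<sigma> * (snd q - b) \<ge> 0"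
  have "\<forall>\<omega>\<in>Om. \<sigma> * (k * \<omega>) \<le> \<sigma> * b"
    using bound by blast
  note inv = a0_unstable_half_plane_invariant[OF assms(1,2) this]
  show "v \<in> {v. \<sigma> * (snd v - b) < 0}"
  proof (rule ccontr)
    assume "v \<notin> {v. \<sigma> * (snd v - b) < 0}"
    then have "?P v" by simp
    show False
    proof (rule cs_prop_no_linear_decrease_point[OF cs \<open>v \<in> D\<close>, of ?P "lam * (\<sigma> * b) / 2"])
      fix w x p and \<tau> :: real
      assume wx: "pc_control Om w" "is_sol lam 0 c w p x" "?P p" "\<tau> \<ge> 0"
      have "\<sigma> * snd (x r) > \<sigma> * b / 2" if "r \<ge> 0" for r
        using inv[OF wx(1-3) that] \<open>\<sigma> * b > 0\<close> by (simp add: algebra_simps)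
      then show "\<sigma> * (c * fst (x \<tau>) - snd (x \<tau>)) + lam * (\<sigma> * b) / 2 * \<tau> \<le> \<sigma> * (c * fst p - snd p)"
        by (rule a0_linear_decrease[OF \<open>lam > 0\<close> wx(1,2) _ wx(4)])
    qed (use inv \<open>?P v\<close> \<open>lam > 0\<close> \<open>\<sigma> * b > 0\<close> in \<open>auto intro!: continuous_intros\<close>)
  qed
qed

lemma unique_control_set_a0_unstable:
  assumes "lam > 0" "c \<noteq> 0" "wm < 0" "0 < wp"
  shows "(\<exists>!C. control_set lam 0 c {wm..wp} C) \<and>
    (\<forall>C. control_set lam 0 c {wm..wp} C \<longrightarrow>
       closure C = UNIV \<times> ((\<lambda>w. - (c / lam) * w) ` {wm..wp}) \<and> open C)"
proof -
  define k where "k = - (c / lam)"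
  obtain tlo thi where "tlo < 0" "0 < thi" and img: "(\<lambda>w. k * w) ` {wm..wp} = {tlo..thi}"
    using image_scale_interval[of k wm wp] assms unfolding k_def by auto
  define C :: "(real \<times> real) set" where "C = UNIV \<times> {tlo<..<thi}"
  have bound: "k * \<omega> \<in> {tlo..thi}" if "\<omega> \<in> {wm..wp}" for \<omega>
    using that unfolding img[symmetric] by blast
  have "(\<exists>!C. control_set lam 0 c {wm..wp} C) \<and> (\<forall>C'. control_set lam 0 c {wm..wp} C' \<longrightarrow> C' = C)"
  proof (rule unique_control_setI)
    show "lam \<noteq> 0" "{wm..wp} \<noteq> {}" "C \<noteq> {}"
      using assms \<open>tlo < 0\<close> \<open>0 < thi\<close> unfolding C_def by auto
    show "\<exists>w x. pc_control {wm..wp} w \<and> is_sol lam 0 c w v x \<and> (\<forall>\<tau>\<ge>0. x \<tau> \<in> C)" if "v \<in> C" for v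
    proof -
      have "snd v \<in> (\<lambda>w. k * w) ` {wm..wp}"
        unfolding img using that unfolding C_def by (auto simp: mem_Times_iff)
      then obtain \<omega> where \<omega>: "\<omega> \<in> {wm..wp}" "snd v = k * \<omega>"
        by blast
      then show ?thesis
        using a0_hold_invariant[OF _ k_def \<omega>(1) _ \<omega>(2)] that \<open>lam > 0\<close> unfolding C_def by simp
    qed
    show "C \<subseteq> reach_closure lam 0 c {wm..wp} v" if "v \<in> C" for v
    proof
      fix y assume "y \<in> C"
      have "reach lam 0 c {wm..wp} v y"
        using a0_unstable_reach[OF assms(1) k_def assms(3,4) \<open>tlo < 0\<close> \<open>0 < thi\<close> img,
            of "snd v" "snd y" "fst v" "fst y"] that \<open>y \<in> C\<close>
        unfolding C_def by (simp add: mem_Times_iff)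
      then show "y \<in> reach_closure lam 0 c {wm..wp} v"
        by (simp add: reach_in_reach_closure)
    qed
    show "D \<subseteq> C" if "cs_prop lam 0 c {wm..wp} D" for D
    proof
      fix v assume "v \<in> D"
      have "D \<subseteq> {v. 1 * (snd v - thi) < 0}" "D \<subseteq> {v. - 1 * (snd v - tlo) < 0}"
        using bound \<open>tlo < 0\<close> \<open>0 < thi\<close>
        by (intro a0_unstable_cs_prop_half_plane[OF \<open>lam > 0\<close> k_def that]; simp)+
      then show "v \<in> C"
        using \<open>v \<in> D\<close> unfolding C_def by (auto simp: mem_Times_iff)
    qed
  qed
  moreover have "open C" "closure C = UNIV \<times> {tlo..thi}"
    unfolding C_def using \<open>tlo < 0\<close> \<open>0 < thi\<close> by (auto intro: open_Times simp: closure_Times)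
  ultimately show ?thesis
    using img unfolding k_def by auto
qed

lemma unique_control_set_a0:
  assumes "a = 0" "lam \<noteq> 0" "c \<noteq> 0" "wm < 0" "0 < wp"
  shows "(\<exists>!C. control_set lam a c {wm..wp} C) \<and>
    (\<forall>C. control_set lam a c {wm..wp} C \<longrightarrow>
       closure C = UNIV \<times> ((\<lambda>w. - (c / lam) * w) ` {wm..wp}) \<and>
       (lam < 0 \<longrightarrow> closed C) \<and> (lam > 0 \<longrightarrow> open C))"
proof (cases "lam < 0")
  case True
  then have "\<not> lam > 0"
    by simp
  with True show ?thesis
    using unique_control_set_a0_stable[OF True assms(3-5)] unfolding \<open>a = 0\<close> by blast
next
  case False
  then have "lam > 0"
    using assms(2) by simp
  with False show ?thesis
    using unique_control_set_a0_unstable[OF \<open>lam > 0\<close> assms(3-5)] unfolding \<open>a = 0\<close> by blast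
qed

section \<open>The case \<open>a > 0\<close>, \<open>lam < 0\<close>\<close>

lemma Cminus_iff:
  assumes "lam \<noteq> 0"
  shows "(s, t) \<in> Cminus lam a c wm wp \<longleftrightarrow>
    t < Fw_level lam a wm (c + a * s) \<and> t < Fw_level lam a wp (c + a * s)"
  unfolding Cminus_def using Fw_eq[OF assms] assms by (simp add: mult_less_0_iff)

lemma open_Cminus:
  assumes "lam \<noteq> 0"
  shows "open (Cminus lam a c wm wp)"
proof -
  have "Cminus lam a c wm wp = {q. snd q < Fw_level lam a wm (c + a * fst q)}
      \<inter> {q. snd q < Fw_level lam a wp (c + a * fst q)}"
    using Cminus_iff[OF assms] by auto
  then show ?thesis
    by (simp add: open_Int open_Collect_less continuous_intros)
qed

text \<open>The second component of \<open>phi_va lam a c \<tau> w\<close> as a function of \<open>u = c + a s = a \<tau> w\<close>.\<close>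
definition va_curve :: "real \<Rightarrow> real \<Rightarrow> real \<Rightarrow> real \<Rightarrow> real" where
  "va_curve lam a w u = a * w\<^sup>2 / lam\<^sup>2 * (exp (lam * u / (a * w)) - lam * u / (a * w) - 1)"

lemma snd_phi_va: "a \<noteq> 0 \<Longrightarrow> w \<noteq> 0 \<Longrightarrow> snd (phi_va lam a c \<tau> w) = va_curve lam a w (a * \<tau> * w)"
  unfolding phi_va_def va_curve_def by simp

lemma va_curve_nonneg: "a \<ge> 0 \<Longrightarrow> va_curve lam a w u \<ge> 0"
  unfolding va_curve_def using exp_ge_add_one_self[of "lam * u / (a * w)"]
  by (intro mult_nonneg_nonneg) (auto simp: algebra_simps)

lemma va_curve_0 [simp]: "va_curve lam a w 0 = 0"
  unfolding va_curve_def by simp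

lemma continuous_on_va_curve [continuous_intros]:
  "continuous_on S f \<Longrightarrow> continuous_on S (\<lambda>x. va_curve lam a w (f x))"
  unfolding va_curve_def divide_inverse by (intro continuous_intros)

lemma Cplus_iff:
  assumes "a > 0" "wm < 0" "0 < wp"
  shows "(s, t) \<in> Cplus lam a c wm wp \<longleftrightarrow>
    (c + a * s \<ge> 0 \<and> t > va_curve lam a wp (c + a * s)) \<or> (c + a * s \<le> 0 \<and> t > va_curve lam a wm (c + a * s))"
proof -
  have branch: "(\<exists>\<tau>\<ge>0. s = fst (phi_va lam a c \<tau> w) \<and> t > snd (phi_va lam a c \<tau> w)) \<longleftrightarrow>
      (c + a * s) / w \<ge> 0 \<and> t > va_curve lam a w (c + a * s)" if "w \<noteq> 0" for w
  proof
    assume "\<exists>\<tau>\<ge>0. s = fst (phi_va lam a c \<tau> w) \<and> t > snd (phi_va lam a c \<tau> w)"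
    then obtain \<tau> where "\<tau> \<ge> 0" "s = fst (phi_va lam a c \<tau> w)" "t > snd (phi_va lam a c \<tau> w)"
      by blast
    then have \<tau>: "\<tau> \<ge> 0" "s = - c / a + \<tau> * w" "t > va_curve lam a w (a * \<tau> * w)"
      using snd_phi_va[of a w] \<open>a > 0\<close> that unfolding phi_va_def by auto
    then have "c + a * s = a * \<tau> * w"
      using \<open>a > 0\<close> by (simp add: field_simps)
    then show "(c + a * s) / w \<ge> 0 \<and> t > va_curve lam a w (c + a * s)"
      using \<tau> \<open>a > 0\<close> that by simp
  next
    assume uw: "(c + a * s) / w \<ge> 0 \<and> t > va_curve lam a w (c + a * s)"
    define \<tau> where "\<tau> = (c + a * s) / w / a"
    have "\<tau> \<ge> 0"
      unfolding \<tau>_def using uw \<open>a > 0\<close> by (simp add: divide_nonneg_pos del: divide_divide_eq_left)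
    moreover have "s = fst (phi_va lam a c \<tau> w)" "a * \<tau> * w = c + a * s"
      unfolding phi_va_def \<tau>_def using \<open>a > 0\<close> that by (simp_all add: field_simps)
    moreover have "snd (phi_va lam a c \<tau> w) = va_curve lam a w (c + a * s)"
      using snd_phi_va[of a w lam c \<tau>] \<open>a * \<tau> * w = c + a * s\<close> \<open>a > 0\<close> that by simp
    ultimately show "\<exists>\<tau>\<ge>0. s = fst (phi_va lam a c \<tau> w) \<and> t > snd (phi_va lam a c \<tau> w)"
      using uw by auto
  qed
  have "(c + a * s) / wp \<ge> 0 \<longleftrightarrow> c + a * s \<ge> 0" "(c + a * s) / wm \<ge> 0 \<longleftrightarrow> c + a * s \<le> 0"
    using assms(2,3) by (auto simp: zero_le_divide_iff)
  then show ?thesis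
    unfolding Cplus_def using branch[of wp] branch[of wm] assms(2,3) by auto
qed

lemma open_Cplus:
  assumes "a > 0" "wm < 0" "0 < wp"
  shows "open (Cplus lam a c wm wp)"
proof -
  let ?u = "\<lambda>q. c + a * fst q"
  let ?P = "\<lambda>w q. va_curve lam a w (?u q) < snd q"
  have "Cplus lam a c wm wp =
      {q. 0 < ?u q \<and> ?P wp q} \<union> {q. ?u q < 0 \<and> ?P wm q} \<union> ({q. ?P wp q} \<inter> {q. ?P wm q})"
  proof (intro set_eqI iffI)
    fix q assume "q \<in> Cplus lam a c wm wp"
    then show "q \<in> {q. 0 < ?u q \<and> ?P wp q} \<union> {q. ?u q < 0 \<and> ?P wm q} \<union> ({q. ?P wp q} \<inter> {q. ?P wm q})"
      using Cplus_iff[OF assms, of "fst q" "snd q"] by (cases "?u q = 0") auto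
  next
    fix q assume "q \<in> {q. 0 < ?u q \<and> ?P wp q} \<union> {q. ?u q < 0 \<and> ?P wm q} \<union> ({q. ?P wp q} \<inter> {q. ?P wm q})"
    then show "q \<in> Cplus lam a c wm wp"
      using Cplus_iff[OF assms, of "fst q" "snd q"] by (cases "?u q \<ge> 0") auto
  qed
  then show ?thesis
    by (simp add: open_Un open_Int open_Collect_conj open_Collect_less continuous_intros)
qed

lemma Fw_level_not_both_pos:
  assumes "a > 0" "wm < 0" "0 < wp" "lam \<noteq> 0"
  shows "\<not> (Fw_level lam a wm u > 0 \<and> Fw_level lam a wp u > 0)"
proof
  assume "Fw_level lam a wm u > 0 \<and> Fw_level lam a wp u > 0"
  moreover have "lam\<^sup>2 > 0"
    using assms(4) by simp
  ultimately have "wm * (lam * u + a * wm) < 0" "wp * (lam * u + a * wp) < 0"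
    unfolding Fw_level_def by (auto simp: divide_less_0_iff neg_divide_less_eq zero_less_divide_iff)
  then have "lam * u + a * wm > 0" "lam * u + a * wp < 0"
    using assms(2,3) by (auto simp: mult_less_0_iff)
  then show False
    using assms(1-3) by (smt (verit) mult_strict_left_mono)
qed

lemma outside_Cplus_Cminus_scale:
  assumes "a > 0" "lam < 0" "wm < 0" "0 < wp"
    and "(s, t) \<notin> Cplus lam a c wm wp \<union> Cminus lam a c wm wp" "0 < \<mu>" "\<mu> \<le> 1"
  shows "(s, \<mu> * t) \<notin> Cplus lam a c wm wp \<union> Cminus lam a c wm wp"
proof -
  let ?u = "c + a * s"
  have "lam \<noteq> 0"
    using assms(2) by simp
  have not_plus: "\<not> ((?u \<ge> 0 \<and> t > va_curve lam a wp ?u) \<or> (?u \<le> 0 \<and> t > va_curve lam a wm ?u))"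
    and not_minus: "\<not> (t < Fw_level lam a wm ?u \<and> t < Fw_level lam a wp ?u)"
    using assms(5) Cplus_iff[OF assms(1,3,4)] Cminus_iff[OF \<open>lam \<noteq> 0\<close>] by auto
  have va: "va_curve lam a w ?u \<ge> 0" for w
    using va_curve_nonneg \<open>a > 0\<close> by simp
  have "\<not> ((?u \<ge> 0 \<and> \<mu> * t > va_curve lam a wp ?u) \<or> (?u \<le> 0 \<and> \<mu> * t > va_curve lam a wm ?u))
      \<and> \<not> (\<mu> * t < Fw_level lam a wm ?u \<and> \<mu> * t < Fw_level lam a wp ?u)"
  proof (cases "t \<ge> 0")
    case True
    then have "0 \<le> \<mu> * t" "\<mu> * t \<le> t"
      using mult_right_mono[of \<mu> 1 t] \<open>0 < \<mu>\<close> \<open>\<mu> \<le> 1\<close> by auto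
    then show ?thesis
      using not_plus Fw_level_not_both_pos[OF assms(1,3,4) \<open>lam \<noteq> 0\<close>, of ?u] by auto
  next
    case False
    then have "\<mu> * t < 0" "t \<le> \<mu> * t"
      using mult_right_mono_neg[of \<mu> 1 t] \<open>0 < \<mu>\<close> \<open>\<mu> \<le> 1\<close> by (auto simp: mult_pos_neg)
    then show ?thesis
      using not_minus va[of wp] va[of wm] by auto
  qed
  then show ?thesis
    using Cplus_iff[OF assms(1,3,4)] Cminus_iff[OF \<open>lam \<noteq> 0\<close>] by auto
qed

lemma reach_closure_under_va_curve:
  assumes "a > 0" "lam < 0" "wm < 0" "0 < wp" "w \<in> {wm, wp}"
    and "(c + a * s) / w \<ge> 0" "0 \<le> t" "t \<le> va_curve lam a w (c + a * s)"
  shows "(s, t) \<in> reach_closure lam a c {wm..wp} v"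
proof -
  have "w \<noteq> 0"
    using assms(3-5) by auto
  define \<tau>1 where "\<tau>1 = (c + a * s) / w / a"
  have "\<tau>1 \<ge> 0"
    unfolding \<tau>1_def using assms(1,6) by (simp add: divide_nonneg_pos del: divide_divide_eq_left)
  have u: "c + a * s = a * w * \<tau>1"
    unfolding \<tau>1_def using \<open>a > 0\<close> \<open>w \<noteq> 0\<close> by simp
  let ?L = "Fw_level lam a w"
  define g where "g \<sigma> = ?L (a * w * \<tau>1) - ?L (a * w * \<sigma>) * exp (lam * (\<tau>1 - \<sigma>))" for \<sigma>
  have flow: "const_flow lam a c w (\<tau>1 - \<sigma>) (- c / a + \<sigma> * w, 0) = (s, g \<sigma>)" for \<sigma>
  proof -
    have "- c / a + \<sigma> * w + w * (\<tau>1 - \<sigma>) = s" "c + a * (- c / a + \<sigma> * w) = a * w * \<sigma>"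
      using u \<open>a > 0\<close> by (simp_all add: field_simps)
    then show ?thesis
      unfolding const_flow_def g_def using u by (simp add: algebra_simps)
  qed
  have "g \<tau>1 = 0"
    unfolding g_def by simp
  moreover have "g 0 = va_curve lam a w (c + a * s)"
    unfolding g_def u Fw_level_def va_curve_def using \<open>a > 0\<close> \<open>w \<noteq> 0\<close> \<open>lam < 0\<close>
    by (simp add: field_simps power2_eq_square)
  moreover have "continuous_on {0..\<tau>1} g"
    unfolding g_def Fw_level_def divide_inverse by (intro continuous_intros)
  ultimately obtain \<sigma> where \<sigma>: "0 \<le> \<sigma>" "\<sigma> \<le> \<tau>1" "g \<sigma> = t"
    using IVT2'[of g \<tau>1 t 0] assms(7,8) \<open>\<tau>1 \<ge> 0\<close> by auto
  have "(- c / a + \<sigma> * w, 0) \<in> reach_closure lam a c {wm..wp} v"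
    by (rule reach_closure_axis[OF assms(2-4)])
  moreover have "w \<in> {wm..wp}"
    using assms(3-5) by auto
  then have "reach lam a c {wm..wp} (- c / a + \<sigma> * w, 0) (const_flow lam a c w (\<tau>1 - \<sigma>) (- c / a + \<sigma> * w, 0))"
    by (rule reach_step[OF reach_refl]) (use \<sigma> in simp)
  then have "(s, t) \<in> reach_closure lam a c {wm..wp} (- c / a + \<sigma> * w, 0)"
    unfolding flow \<sigma>(3) by (rule reach_in_reach_closure)
  ultimately show ?thesis
    by (rule reach_closure_trans)
qed

lemma reach_closure_outside_Cplus_Cminus:
  assumes "a > 0" "lam < 0" "wm < 0" "0 < wp"
    and "(s, t) \<notin> Cplus lam a c wm wp \<union> Cminus lam a c wm wp"
  shows "(s, t) \<in> reach_closure lam a c {wm..wp} v"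
proof (cases "t \<ge> 0")
  case True
  have "\<not> ((c + a * s \<ge> 0 \<and> t > va_curve lam a wp (c + a * s)) \<or> (c + a * s \<le> 0 \<and> t > va_curve lam a wm (c + a * s)))"
    using assms(5) Cplus_iff[OF assms(1,3,4)] by auto
  then show ?thesis
    using reach_closure_under_va_curve[OF assms(1-4), of wp c s t] reach_closure_under_va_curve[OF assms(1-4), of wm c s t]
      True assms(3,4)
    by (cases "c + a * s \<ge> 0") (auto simp: zero_le_divide_iff not_less)
next
  case False
  let ?u = "c + a * s"
  have cont: "continuous_on S (\<lambda>\<omega>. Fw_level lam a \<omega> ?u)" for S
    by (intro continuous_intros)
  consider "\<not> t < Fw_level lam a wm ?u" | "\<not> t < Fw_level lam a wp ?u"
    using assms(5) Cminus_iff[of lam] \<open>lam < 0\<close> by auto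
  then obtain \<omega> where "\<omega> \<in> {wm..wp}" "Fw_level lam a \<omega> ?u = t"
  proof cases
    case 1
    then obtain \<omega> where "wm \<le> \<omega>" "\<omega> \<le> 0" "Fw_level lam a \<omega> ?u = t"
      using IVT'[of "\<lambda>\<omega>. Fw_level lam a \<omega> ?u" wm t 0, OF _ _ _ cont] False \<open>wm < 0\<close> by auto
    then show ?thesis using that[of \<omega>] \<open>0 < wp\<close> by auto
  next
    case 2
    then obtain \<omega> where "0 \<le> \<omega>" "\<omega> \<le> wp" "Fw_level lam a \<omega> ?u = t"
      using IVT2'[of "\<lambda>\<omega>. Fw_level lam a \<omega> ?u" wp t 0, OF _ _ _ cont] False \<open>0 < wp\<close> by auto
    then show ?thesis using that[of \<omega>] \<open>wm < 0\<close> by auto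
  qed
  then show ?thesis
    using reach_closure_Fw_level[OF assms(2-4)] by metis
qed

definition dva_curve :: "real \<Rightarrow> real \<Rightarrow> real \<Rightarrow> real \<Rightarrow> real" where
  "dva_curve lam a w u = w / lam * (exp (lam * u / (a * w)) - 1)"

lemma va_curve_lyapunov_has_derivative:
  assumes "a \<noteq> 0" "w \<noteq> 0" "lam \<noteq> 0"
  shows "((\<lambda>q. snd q - va_curve lam a w (c + a * fst q)) has_derivative
    (\<lambda>h. snd h - dva_curve lam a w (c + a * fst q) * (a * fst h))) (at q)"
proof -
  have "(va_curve lam a w has_real_derivative dva_curve lam a w u) (at u)" for u
    unfolding va_curve_def dva_curve_def using assms
    by (auto intro!: derivative_eq_intros simp: field_simps power2_eq_square)
  moreover have "((\<lambda>q. c + a * fst q) has_derivative (\<lambda>h. a * fst h)) (at q)"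
    by (auto intro!: derivative_eq_intros)
  ultimately have "((\<lambda>q. va_curve lam a w (c + a * fst q)) has_derivative
      (\<lambda>h. a * fst h * dva_curve lam a w (c + a * fst q))) (at q)"
    by (rule DERIV_compose_FDERIV)
  then show ?thesis
    by (auto intro!: derivative_eq_intros simp: mult.commute)
qed

text \<open>With \<open>x = lam u / (a w)\<close> the defect is \<open>(a w / lam) (w - \<omega>) (exp x - x - 1)\<close>, and
  \<open>exp x \<ge> 1 + x\<close>.\<close>
lemma va_curve_lyapunov_decrease:
  assumes "a > 0" "lam < 0" "w \<noteq> 0" "w * (w - \<omega>) \<ge> 0"
  shows "snd (fld lam a c \<omega> q) - dva_curve lam a w (c + a * fst q) * (a * fst (fld lam a c \<omega> q))
    \<le> - (- lam) * (snd q - va_curve lam a w (c + a * fst q))"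
proof -
  define u where "u = c + a * fst q"
  define x where "x = lam * u / (a * w)"
  have u: "u = a * w / lam * x"
    unfolding x_def using assms by (simp add: field_simps)
  have "snd (fld lam a c \<omega> q) - dva_curve lam a w u * (a * fst (fld lam a c \<omega> q))
      - (- (- lam) * (snd q - va_curve lam a w u)) = a * (w * (w - \<omega>)) / lam * (exp x - x - 1)"
    unfolding fld_def dva_curve_def va_curve_def x_def[symmetric] u_def[symmetric] u
    using assms by (simp add: field_simps power2_eq_square)
  moreover have "a * (w * (w - \<omega>)) / lam \<le> 0"
    using assms by (simp add: divide_nonneg_neg)
  moreover have "exp x - x - 1 \<ge> 0"
    using exp_ge_add_one_self[of x] by linarith
  ultimately show ?thesis
    unfolding u_def by (smt (verit) mult_nonpos_nonneg)
qed

lemma cs_prop_disjoint_Cplus: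
  assumes "a > 0" "lam < 0" "wm < 0" "0 < wp" and cs: "cs_prop lam a c {wm..wp} D"
  shows "D \<inter> Cplus lam a c wm wp = {}"
proof -
  have no_point: False if "v \<in> D" "w \<in> {wm, wp}" "snd v - va_curve lam a w (c + a * fst v) > 0" for v w
  proof (rule cs_prop_no_lyapunov_point[OF cs \<open>v \<in> D\<close>])
    show "((\<lambda>q. snd q - va_curve lam a w (c + a * fst q)) has_derivative
        (\<lambda>h. snd h - dva_curve lam a w (c + a * fst q) * (a * fst h))) (at q)" for q
      using that assms by (intro va_curve_lyapunov_has_derivative) auto
    fix q :: "real \<times> real" and \<omega> assume "\<omega> \<in> {wm..wp}"
    then have "w * (w - \<omega>) \<ge> 0"
      using that(2) assms(3,4) by (auto intro: mult_nonpos_nonpos)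
    then show "snd (fld lam a c \<omega> q) - dva_curve lam a w (c + a * fst q) * (a * fst (fld lam a c \<omega> q))
        \<le> - (- lam) * (snd q - va_curve lam a w (c + a * fst q))"
      using that(2) assms by (intro va_curve_lyapunov_decrease) auto
  qed (use that \<open>lam < 0\<close> in auto)
  show ?thesis
    using no_point[of _ wp] no_point[of _ wm] Cplus_iff[OF assms(1,3,4)] by fastforce
qed

lemma Fw_level_lyapunov_has_derivative:
  "lam \<noteq> 0 \<Longrightarrow> ((\<lambda>q. Fw_level lam a w (c + a * fst q) - snd q) has_derivative
    (\<lambda>h. - (w / lam) * (a * fst h) - snd h)) (at q)"
  unfolding Fw_level_def by (auto intro!: derivative_eq_intros simp: field_simps power2_eq_square)

lemma Fw_level_lyapunov_decrease:
  assumes "lam < 0" "(\<omega> - w) * (lam * (c + a * fst q) + a * w) \<le> 0"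
  shows "- (w / lam) * (a * fst (fld lam a c \<omega> q)) - snd (fld lam a c \<omega> q)
    \<le> - (- lam) * (Fw_level lam a w (c + a * fst q) - snd q)"
proof -
  have "- (w / lam) * (a * fst (fld lam a c \<omega> q)) - snd (fld lam a c \<omega> q)
      - (- (- lam) * (Fw_level lam a w (c + a * fst q) - snd q))
      = - ((\<omega> - w) * (lam * (c + a * fst q) + a * w)) / lam"
    unfolding fld_def Fw_level_def using assms(1) by (simp add: field_simps power2_eq_square)
  moreover have "- ((\<omega> - w) * (lam * (c + a * fst q) + a * w)) / lam \<le> 0"
    using assms by (simp add: divide_nonpos_neg)
  ultimately show ?thesis
    by linarith
qed

lemma Fw_level_le_Fw_level_iff:
  assumes "lam \<noteq> 0" "wm < wp"
  shows "Fw_level lam a wm u \<le> Fw_level lam a wp u \<longleftrightarrow> lam * u + a * (wm + wp) \<le> 0"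
    and "Fw_level lam a wp u \<le> Fw_level lam a wm u \<longleftrightarrow> lam * u + a * (wm + wp) \<ge> 0"
proof -
  define X where "X = lam * u + a * (wm + wp)"
  define p where "p = (wp - wm) / lam\<^sup>2"
  have "p > 0"
    unfolding p_def using assms by simp
  then have "p * X \<le> 0 \<longleftrightarrow> X \<le> 0" "p * X \<ge> 0 \<longleftrightarrow> X \<ge> 0"
    by (simp_all add: mult_le_0_iff zero_le_mult_iff)
  moreover have "Fw_level lam a wp u - Fw_level lam a wm u = - (p * X)"
    unfolding Fw_level_def X_def p_def using assms(1) by (simp add: field_simps power2_eq_square)
  ultimately show "Fw_level lam a wm u \<le> Fw_level lam a wp u \<longleftrightarrow> lam * u + a * (wm + wp) \<le> 0"
    and "Fw_level lam a wp u \<le> Fw_level lam a wm u \<longleftrightarrow> lam * u + a * (wm + wp) \<ge> 0"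
    unfolding X_def[symmetric] by linarith+
qed

text \<open>Neither \<open>Fw_level lam a wm - t\<close> nor \<open>Fw_level lam a wp - t\<close> alone decreases along all
  controls, but each does where it realises the minimum of the two.\<close>
lemma cs_prop_disjoint_Cminus:
  assumes "a > 0" "lam < 0" "wm < 0" "0 < wp" and cs: "cs_prop lam a c {wm..wp} D"
  shows "D \<inter> Cminus lam a c wm wp = {}"
proof -
  let ?u = "\<lambda>q. c + a * fst q"
  let ?V1 = "\<lambda>q. Fw_level lam a wm (?u q) - snd q" and ?V2 = "\<lambda>q. Fw_level lam a wp (?u q) - snd q"
  let ?U1 = "{q. lam * ?u q + a * wm < 0}" and ?U2 = "{q. lam * ?u q + a * wp > 0}"
  have signs: "a * wm < 0" "a * wp > 0" "lam \<noteq> 0" "wm < wp"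
    using assms(1-4) by (simp_all add: mult_pos_neg)
  have U1: "q \<in> ?U1" if "?V1 q \<le> ?V2 q" for q
    using Fw_level_le_Fw_level_iff(1)[of lam wm wp a "?u q"] that signs by (simp add: algebra_simps)
  have U2: "q \<in> ?U2" if "?V2 q \<le> ?V1 q" for q
    using Fw_level_le_Fw_level_iff(2)[of lam wm wp a "?u q"] that signs by (simp add: algebra_simps)
  have False if "v \<in> D" "v \<in> Cminus lam a c wm wp" for v
  proof (rule cs_prop_no_exp_decay_point[OF cs \<open>v \<in> D\<close>, of "- lam" "\<lambda>q. min (?V1 q) (?V2 q)"])
    show "continuous_on UNIV (\<lambda>q. min (?V1 q) (?V2 q))"
      by (intro continuous_intros)
    show "min (?V1 v) (?V2 v) > 0"
      using that(2) Cminus_iff[where s = "fst v" and t = "snd v"] \<open>lam < 0\<close> by simp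
    fix w x p s assume wx: "pc_control {wm..wp} w" "is_sol lam a c w p x" "(s :: real) \<ge> 0"
    have "lam \<noteq> 0"
      using \<open>lam < 0\<close> by simp
    show "exp (- lam * s) * min (?V1 (x s)) (?V2 (x s)) \<le> min (?V1 p) (?V2 p)"
    proof (rule lyapunov_min_decrease[OF wx(1,2) Fw_level_lyapunov_has_derivative[OF \<open>lam \<noteq> 0\<close>] _ _
          Fw_level_lyapunov_has_derivative[OF \<open>lam \<noteq> 0\<close>] _ _ U1 U2 wx(3)])
      show "open ?U1" "open ?U2"
        by (intro open_Collect_less continuous_intros)+
      fix q \<omega> assume "\<omega> \<in> {wm..wp}"
      show "- (wm / lam) * (a * fst (fld lam a c \<omega> q)) - snd (fld lam a c \<omega> q) \<le> - (- lam) * ?V1 q"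
        if "q \<in> ?U1"
        using that \<open>\<omega> \<in> {wm..wp}\<close> \<open>lam < 0\<close> by (intro Fw_level_lyapunov_decrease) (auto intro: mult_nonneg_nonpos)
      show "- (wp / lam) * (a * fst (fld lam a c \<omega> q)) - snd (fld lam a c \<omega> q) \<le> - (- lam) * ?V2 q"
        if "q \<in> ?U2"
        using that \<open>\<omega> \<in> {wm..wp}\<close> \<open>lam < 0\<close> by (intro Fw_level_lyapunov_decrease) (auto intro: mult_nonpos_nonneg)
    qed
  qed (use \<open>lam < 0\<close> in simp)
  then show ?thesis
    by blast
qed

lemma unique_control_set_a_pos_stable:
  assumes "a > 0" "lam < 0" "wm < 0" "0 < wp"
  shows "(\<exists>!C. control_set lam a c {wm..wp} C) \<and>
    (\<forall>C. control_set lam a c {wm..wp} C \<longrightarrow>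
       closed C \<and> C = UNIV - (Cplus lam a c wm wp \<union> Cminus lam a c wm wp))"
proof -
  let ?C = "UNIV - (Cplus lam a c wm wp \<union> Cminus lam a c wm wp)"
  have "(\<exists>!C. control_set lam a c {wm..wp} C) \<and> (\<forall>C'. control_set lam a c {wm..wp} C' \<longrightarrow> C' = ?C)"
  proof (rule unique_control_setI)
    show "lam \<noteq> 0" "{wm..wp} \<noteq> {}"
      using assms by auto
    have "(- c / a, 0) \<in> ?C"
      using Cplus_iff[OF assms(1,3,4)] Cminus_iff[of lam] Fw_level_not_both_pos[OF assms(1,3,4)] assms
      by (simp add: not_less)
    then show "?C \<noteq> {}"
      by blast
    show "\<exists>w x. pc_control {wm..wp} w \<and> is_sol lam a c w v x \<and> (\<forall>\<tau>\<ge>0. x \<tau> \<in> ?C)" if "v \<in> ?C" for v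
      using zero_control_invariant[OF assms(2) _ that] outside_Cplus_Cminus_scale[OF assms] assms(3,4) by auto
    show "?C \<subseteq> reach_closure lam a c {wm..wp} v" for v
    proof
      fix y assume "y \<in> ?C"
      then show "y \<in> reach_closure lam a c {wm..wp} v"
        using reach_closure_outside_Cplus_Cminus[OF assms, of "fst y" "snd y" c v] by simp
    qed
    show "D \<subseteq> ?C" if "cs_prop lam a c {wm..wp} D" for D
      using cs_prop_disjoint_Cplus[OF assms that] cs_prop_disjoint_Cminus[OF assms that] by blast
  qed
  moreover have "closed ?C"
    using open_Cplus[OF assms(1,3,4)] open_Cminus[of lam] assms(2) by (intro closed_Diff) auto
  ultimately show ?thesis
    by auto
qed

theorem theorem1:
  fixes lam a c wm wp :: real
  assumes "lam \<noteq> 0" and "a \<ge> 0" and "a\<^sup>2 + c\<^sup>2 \<noteq> 0" and "wm < 0" and "0 < wp"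
  shows "(a = 0 \<longrightarrow>
            (\<exists>!C. control_set lam a c {wm..wp} C) \<and>
            (\<forall>C. control_set lam a c {wm..wp} C \<longrightarrow>
               closure C = UNIV \<times> ((\<lambda>w. - (c / lam) * w) ` {wm..wp}) \<and>
               (lam < 0 \<longrightarrow> closed C) \<and> (lam > 0 \<longrightarrow> open C)))
       \<and> (a > 0 \<and> lam < 0 \<longrightarrow>
            (\<exists>!C. control_set lam a c {wm..wp} C) \<and>
            (\<forall>C. control_set lam a c {wm..wp} C \<longrightarrow>
               closed C \<and> C = UNIV - (Cplus lam a c wm wp \<union> Cminus lam a c wm wp)))"
proof (rule conjI; rule impI)
  assume "a = 0"
  with assms(3) have "c \<noteq> 0"
    by simp
  with \<open>a = 0\<close> show "(\<exists>!C. control_set lam a c {wm..wp} C) \<and>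
      (\<forall>C. control_set lam a c {wm..wp} C \<longrightarrow>
         closure C = UNIV \<times> ((\<lambda>w. - (c / lam) * w) ` {wm..wp}) \<and>
         (lam < 0 \<longrightarrow> closed C) \<and> (lam > 0 \<longrightarrow> open C))"
    by (rule unique_control_set_a0[OF _ assms(1) _ assms(4,5)])
next
  assume "a > 0 \<and> lam < 0"
  then have "a > 0" "lam < 0"
    by simp_all
  then show "(\<exists>!C. control_set lam a c {wm..wp} C) \<and>
      (\<forall>C. control_set lam a c {wm..wp} C \<longrightarrow>
         closed C \<and> C = UNIV - (Cplus lam a c wm wp \<union> Cminus lam a c wm wp))"
    by (rule unique_control_set_a_pos_stable[OF _ _ assms(4,5)])
qed

end
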